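(* Let $\Gamma$ be a gain operator on $\ell^\infty_+(\mathcal I)$ with $|\mathcal I|<\infty$. The following are equivalent: (a) there exists $\rho\in\mathcal K_\infty$ such that $\Gamma_\rho$ satisfies the $\oplus$-MBI property; (b) there exists a path of strict decay for $\Gamma$.
   Context: Let $\mathcal I$ be a nonempty countable index set; $\ell^\infty_+(\mathcal I)$ is the cone of nonnegative real families $s=(s_i)_{i\in\mathcal I}$ with $\|s\|:=\sup_i|s_i|<\infty$, ordered componentwise; $\mathbf 1$ is the all-ones vector; $\oplus$ is the componentwise maximum. $\mathcal K_\infty$: continuous strictly increasing unbounded $\gamma:\mathbb R_+\to\mathbb R_+$ with $\gamma(0)=0$, acting componentwise. For $\mathcal J\subset\mathcal I$, $s_{|\mathcal J}$ agrees with $s$ on $\mathcal J$ and is $0$ elsewhere. Gain operator: for each $i$ a finite (possibly empty) $\mathcal I_i\subset\mathcal I\setminus\{i\}$; directed graph $\mathcal G$ with vertices $\mathcal I$ and edges $ji$, $j\in\mathcal I_i$; a pointwise equicontinuous family $\gamma_{ij}\in\mathcal K_\infty$ ($ji\in E(\mathcal G)$); functions $\mu_i:\ell^\infty_+(\mathcal I)\to[0,\infty]$ with (M1) some $\xi\in\mathcal K_\infty$ has $\mu_i(0)=0$, $\mu_i(s)\ge\xi(\|s\|)$; (M2) $\mu_i$ monotone; (M3) for each finite $\mathcal J$, $\mu_i$ restricted to vectors vanishing off $\mathcal J$ is finite-valued and continuous; (M4) for each norm-bounded $A$ and $\varepsilon>0$ there is $\delta>0$ with $\sup_i|\mu_i(s_{|\mathcal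 I_i})-\mu_i(s^0_{|\mathcal I_i})|\le\varepsilon$ whenever $s^0\in A$, $\|s-s^0\|\le\delta$. $\Gamma_i(s):=\mu_i([\gamma_{ij}(s_j)]_{j\in\mathcal I_i})$ (argument zero outside $\mathcal I_i$). $\Gamma_\rho:=(\mathrm{id}+\rho)\circ\Gamma$. A monotone $T$ has the $\oplus$-MBI property if there is $\varphi\in\mathcal K_\infty$ such that for all $s,b$, $s\le b\oplus T(s)$ implies $\|s\|\le\varphi(\|b\|)$. A path of strict decay for $\Gamma$ is a map $\sigma:\mathbb R_+\to\ell^\infty_+(\mathcal I)$ such that: (i) for some $\rho\in\mathcal K_\infty$, $\Gamma_\rho(\sigma(r))\le\sigma(r)$ for all $r\ge0$; (ii) $\varphi_{\min}(r)\mathbf 1\le\sigma(r)\le\varphi_{\max}(r)\mathbf 1$ for some $\varphi_{\min},\varphi_{\max}\in\mathcal K_\infty$; (iii) each $\sigma_i\in\mathcal K_\infty$; (iv) for each compact $K\subset(0,\infty)$ there are $0<l\le L$ with $l|r_1-r_2|\le|\sigma_i^{-1}(r_1)-\sigma_i^{-1}(r_2)|\le L|r_1-r_2|$ for all $r_1,r_2\in K$, $i\in\mathcal I$. *)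

theory Defs
  imports "HOL-Analysis.Analysis"
begin

text \<open>The index set is modelled by a finite type 'i (nonempty and countable automatically).
  Elements of the cone are functions s :: 'i => real with s i >= 0 for all i.\<close>

definition pos_cone :: "('i \<Rightarrow> real) set" where
  "pos_cone = {s. \<forall>i. 0 \<le> s i}"

definition supnorm :: "('i::finite \<Rightarrow> real) \<Rightarrow> real" where
  "supnorm s = Max (range (\<lambda>i. \<bar>s i\<bar>))"

definition Kinf :: "(real \<Rightarrow> real) \<Rightarrow> bool" where
  "Kinf g \<longleftrightarrow> continuous_on {0..} g \<and> strict_mono_on {0..} g \<and> g 0 = 0
     \<and> (\<forall>r\<ge>0. 0 \<le> g r) \<and> (\<forall>M. \<exists>r\<ge>0. M < g r)"

definition restr :: "('i \<Rightarrow> real) \<Rightarrow> 'i set \<Rightarrow> ('i \<Rightarrow> real)" where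
  "restr s J = (\<lambda>j. if j \<in> J then s j else 0)"

text \<open>Data of a gain operator: neighbour sets Ii, gains gamma i j (edge j -> i, j in Ii i),
  and functions mu i with values in [0,infinity] (modelled as ereal).\<close>
definition gain_operator ::
  "('i::finite \<Rightarrow> 'i set) \<Rightarrow> ('i \<Rightarrow> 'i \<Rightarrow> real \<Rightarrow> real) \<Rightarrow> ('i \<Rightarrow> ('i \<Rightarrow> real) \<Rightarrow> ereal) \<Rightarrow> bool"
where
  "gain_operator Ii gam mu \<longleftrightarrow>
     (\<forall>i. finite (Ii i) \<and> i \<notin> Ii i)
   \<and> (\<forall>i. \<forall>j\<in>Ii i. Kinf (gam i j))
   \<and> (\<forall>r\<ge>0. \<forall>\<epsilon>>0. \<exists>\<delta>>0. \<forall>i. \<forall>j\<in>Ii i. \<forall>r'\<ge>0.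
         \<bar>r' - r\<bar> < \<delta> \<longrightarrow> \<bar>gam i j r' - gam i j r\<bar> < \<epsilon>)
   \<and> (\<forall>i. \<forall>s\<in>pos_cone. 0 \<le> mu i s)
   \<comment> \<open>(M1)\<close>
   \<and> (\<exists>\<xi>. Kinf \<xi> \<and> (\<forall>i. mu i (\<lambda>_. 0) = 0 \<and> (\<forall>s\<in>pos_cone. ereal (\<xi> (supnorm s)) \<le> mu i s)))
   \<comment> \<open>(M2)\<close>
   \<and> (\<forall>i. \<forall>s\<in>pos_cone. \<forall>s'\<in>pos_cone. s \<le> s' \<longrightarrow> mu i s \<le> mu i s')
   \<comment> \<open>(M3)\<close>
   \<and> (\<forall>i. \<forall>J. finite J \<longrightarrow>
         (\<forall>s\<in>pos_cone. (\<forall>k. k \<notin> J \<longrightarrow> s k = 0) \<longrightarrow> \<bar>mu i s\<bar> \<noteq> \<infinity>)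
       \<and> continuous_on {s\<in>pos_cone. \<forall>k. k \<notin> J \<longrightarrow> s k = 0} (mu i))
   \<comment> \<open>(M4)\<close>
   \<and> (\<forall>A C \<epsilon>. A \<subseteq> pos_cone \<and> (\<forall>s\<in>A. supnorm s \<le> C) \<and> 0 < \<epsilon> \<longrightarrow>
        (\<exists>\<delta>>0. \<forall>s0\<in>A. \<forall>s\<in>pos_cone. supnorm (s - s0) \<le> \<delta> \<longrightarrow>
            (\<forall>i. \<bar>mu i (restr s (Ii i)) - mu i (restr s0 (Ii i))\<bar> \<le> ereal \<epsilon>)))"

definition Gam ::
  "('i \<Rightarrow> 'i set) \<Rightarrow> ('i \<Rightarrow> 'i \<Rightarrow> real \<Rightarrow> real) \<Rightarrow> ('i \<Rightarrow> ('i \<Rightarrow> real) \<Rightarrow> ereal)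
     \<Rightarrow> ('i \<Rightarrow> real) \<Rightarrow> ('i \<Rightarrow> real)"
where
  "Gam Ii gam mu s = (\<lambda>i. real_of_ereal (mu i (\<lambda>j. if j \<in> Ii i then gam i j (s j) else 0)))"

definition Gam_rho ::
  "(real \<Rightarrow> real) \<Rightarrow> ('i \<Rightarrow> 'i set) \<Rightarrow> ('i \<Rightarrow> 'i \<Rightarrow> real \<Rightarrow> real) \<Rightarrow> ('i \<Rightarrow> ('i \<Rightarrow> real) \<Rightarrow> ereal)
     \<Rightarrow> ('i \<Rightarrow> real) \<Rightarrow> ('i \<Rightarrow> real)"
where
  "Gam_rho \<rho> Ii gam mu s = (\<lambda>i. Gam Ii gam mu s i + \<rho> (Gam Ii gam mu s i))"

text \<open>oplus-MBI property (componentwise maximum b oplus T s = sup b (T s))\<close>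
definition max_MBI :: "(('i::finite \<Rightarrow> real) \<Rightarrow> ('i \<Rightarrow> real)) \<Rightarrow> bool" where
  "max_MBI T \<longleftrightarrow> (\<exists>\<phi>. Kinf \<phi> \<and> (\<forall>s\<in>pos_cone. \<forall>b\<in>pos_cone.
       s \<le> (\<lambda>i. max (b i) (T s i)) \<longrightarrow> supnorm s \<le> \<phi> (supnorm b)))"

definition path_strict_decay ::
  "('i::finite \<Rightarrow> 'i set) \<Rightarrow> ('i \<Rightarrow> 'i \<Rightarrow> real \<Rightarrow> real) \<Rightarrow> ('i \<Rightarrow> ('i \<Rightarrow> real) \<Rightarrow> ereal)
     \<Rightarrow> (real \<Rightarrow> ('i \<Rightarrow> real)) \<Rightarrow> bool"
where
  "path_strict_decay Ii gam mu \<sigma> \<longleftrightarrow>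
     (\<forall>r\<ge>0. \<sigma> r \<in> pos_cone)
   \<and> (\<exists>\<rho>. Kinf \<rho> \<and> (\<forall>r\<ge>0. Gam_rho \<rho> Ii gam mu (\<sigma> r) \<le> \<sigma> r))
   \<and> (\<exists>\<phi>min \<phi>max. Kinf \<phi>min \<and> Kinf \<phi>max \<and>
        (\<forall>r\<ge>0. \<forall>i. \<phi>min r \<le> \<sigma> r i \<and> \<sigma> r i \<le> \<phi>max r))
   \<and> (\<forall>i. Kinf (\<lambda>r. \<sigma> r i))
   \<and> (\<forall>K. compact K \<and> K \<subseteq> {0<..} \<longrightarrow>
        (\<exists>l L. 0 < l \<and> l \<le> L \<and> (\<forall>r1\<in>K. \<forall>r2\<in>K. \<forall>i.
           l * \<bar>r1 - r2\<bar> \<le> \<bar>inv_into {0..} (\<lambda>r. \<sigma> r i) r1 - inv_into {0..} (\<lambda>r. \<sigma> r i) r2\<bar>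
         \<and> \<bar>inv_into {0..} (\<lambda>r. \<sigma> r i) r1 - inv_into {0..} (\<lambda>r. \<sigma> r i) r2\<bar> \<le> L * \<bar>r1 - r2\<bar>)))"

end

theory Submission
  imports Defs
begin

text \<open>
  Write \<open>\<Gamma>'\<close> for \<open>(id + \<rho>/2) \<circ> \<Gamma>\<close>.

  (b) \<Longrightarrow> (a): if \<open>s \<le> b \<oplus> \<Gamma>'(s)\<close>, let \<open>r\<close> be least with \<open>s \<le> \<sigma>(r)\<close> and let \<open>k\<close> be a component
  where \<open>s\<close> touches \<open>\<sigma>(r)\<close>. Since \<open>\<sigma>(r)\<close> decays with the larger gain \<open>\<rho>\<close>, the inequality
  \<open>s\<^sub>k \<le> \<Gamma>'(s)\<^sub>k\<close> forces \<open>s\<^sub>k = 0\<close>; otherwise \<open>s\<^sub>k \<le> b\<^sub>k\<close>, so \<open>\<phi>min(r) \<le> \<parallel>b\<parallel>\<close> and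
  \<open>\<parallel>s\<parallel> \<le> \<phi>max(r) \<le> \<phi>max(\<phi>min\<^sup>-\<^sup>1(\<parallel>b\<parallel>))\<close>. Hence \<open>\<Gamma>'\<close> has the MBI property.

  (a) \<Longrightarrow> (b): the MBI property bounds the solutions of \<open>x \<le> c \<oplus> \<Gamma>\<^sub>\<rho>(x)\<close>, so they have a
  greatest element \<open>w(c) \<ge> c\<close>, and \<open>w(0) = 0\<close>. Descending from \<open>w(c')\<close> towards \<open>w(c)\<close> with gains
  decreasing from \<open>\<rho>\<close> to \<open>\<rho>/2\<close> produces strictly decreasing points \<open>x\<^sub>m \<rightarrow> w(c)\<close> with
  \<open>\<Gamma>'(x\<^sub>m) \<le> x\<^sub>m\<^sub>+\<^sub>1\<close>; for \<open>c > 0\<close> finitely many steps reach a point whose \<open>\<Gamma>'\<close>-image lies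
  below \<open>w(c)\<close>. Concatenating such pieces along increasing levels \<open>c\<close>, and the infinite descent
  from \<open>w(1)\<close> to \<open>w(0) = 0\<close>, gives a bi-infinite chain \<open>p\<^sub>k < p\<^sub>k\<^sub>+\<^sub>1\<close> with \<open>\<Gamma>'(p\<^sub>k\<^sub>+\<^sub>1) \<le> p\<^sub>k\<close>,
  tending to \<open>0\<close> and to \<open>\<infinity>\<close>. Interpolating it linearly in \<open>ln r\<close> yields a path of strict decay
  for the gain \<open>\<rho>/2\<close>.
\<close>

section \<open>Functions of class K-infinity\<close>

lemma Kinf_less: "Kinf g \<Longrightarrow> 0 \<le> x \<Longrightarrow> x < y \<Longrightarrow> g x < g y"
  unfolding Kinf_def by (auto intro: strict_mono_onD)

lemma Kinf_mono: "Kinf g \<Longrightarrow> 0 \<le> x \<Longrightarrow> x \<le> y \<Longrightarrow> g x \<le> g y"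
  using Kinf_less[of g x y] by (cases "x = y") auto

lemma Kinf_le_iff: "Kinf g \<Longrightarrow> 0 \<le> x \<Longrightarrow> 0 \<le> y \<Longrightarrow> g x \<le> g y \<longleftrightarrow> x \<le> y"
  using Kinf_less[of g y x] Kinf_mono[of g x y] by (meson not_le)

lemma Kinf_nonneg: "Kinf g \<Longrightarrow> 0 \<le> x \<Longrightarrow> 0 \<le> g x"
  unfolding Kinf_def by auto

lemma Kinf_0: "Kinf g \<Longrightarrow> g 0 = 0"
  unfolding Kinf_def by auto

lemma Kinf_pos: "Kinf g \<Longrightarrow> 0 < x \<Longrightarrow> 0 < g x"
  using Kinf_less[of g 0 x] Kinf_0[of g] by auto

lemma Kinf_tendsto:
  assumes "Kinf g" "\<And>n. 0 \<le> x n" "x \<longlonglongrightarrow> y"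
  shows "(\<lambda>n. g (x n)) \<longlonglongrightarrow> g y"
  by (rule continuous_on_tendsto_compose[of "{0..}" g])
     (use assms in \<open>auto simp: Kinf_def intro: LIMSEQ_le_const\<close>)

lemma Kinf_image_atLeastAtMost:
  assumes g: "Kinf g" and x: "0 \<le> x"
  shows "g ` {0..x} = {0..g x}"
proof
  show "g ` {0..x} \<subseteq> {0..g x}"
    using Kinf_nonneg[OF g] Kinf_mono[OF g] by auto
  show "{0..g x} \<subseteq> g ` {0..x}"
  proof
    fix y assume "y \<in> {0..g x}"
    moreover have "continuous_on {0..x} g"
      using g unfolding Kinf_def by (auto intro: continuous_on_subset)
    ultimately obtain z where "0 \<le> z" "z \<le> x" "g z = y"
      using IVT'[of g 0 y x] Kinf_0[OF g] x by auto
    then show "y \<in> g ` {0..x}" by auto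
  qed
qed

lemma Kinf_surj:
  assumes g: "Kinf g" and y: "0 \<le> y"
  shows "y \<in> g ` {0..}"
proof -
  obtain x where x: "0 \<le> x" "y < g x" using g unfolding Kinf_def by blast
  then have "y \<in> g ` {0..x}" using Kinf_image_atLeastAtMost[OF g x(1)] y by simp
  then show ?thesis by auto
qed

lemma Kinf_inj: "Kinf g \<Longrightarrow> inj_on g {0..}"
  unfolding Kinf_def by (auto intro: strict_mono_on_imp_inj_on)

lemma Kinf_inv_into_nonneg: "Kinf g \<Longrightarrow> 0 \<le> y \<Longrightarrow> 0 \<le> inv_into {0..} g y"
  using inv_into_into[of y g "{0..}"] Kinf_surj by auto

lemma Kinf_f_inv_into: "Kinf g \<Longrightarrow> 0 \<le> y \<Longrightarrow> g (inv_into {0..} g y) = y"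
  using f_inv_into_f[of y g "{0..}"] Kinf_surj by auto

lemma Kinf_inv_into_f: "Kinf g \<Longrightarrow> 0 \<le> x \<Longrightarrow> inv_into {0..} g (g x) = x"
  using inv_into_f_f[OF Kinf_inj] by auto

lemma Kinf_inv_into_less_iff:
  assumes "Kinf g" "0 \<le> x" "0 \<le> y"
  shows "inv_into {0..} g y < x \<longleftrightarrow> y < g x"
  using Kinf_le_iff[OF assms(1,2) Kinf_inv_into_nonneg[OF assms(1,3)]]
    Kinf_f_inv_into[OF assms(1,3)] by linarith

lemma Kinf_inverse:
  assumes g: "Kinf g"
  shows "Kinf (inv_into {0..} g)" (is "Kinf ?h")
  unfolding Kinf_def
proof (intro conjI allI impI)
  show "continuous_on {0..} ?h"
    unfolding continuous_on_eq_continuous_within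
  proof
    fix y :: real assume y: "y \<in> {0..}"
    obtain x where x: "0 \<le> x" "y < g x"
      using g unfolding Kinf_def by blast
    have "continuous_on (g ` {0..x}) ?h"
      by (rule continuous_on_inv)
         (use g in \<open>auto simp: Kinf_def Kinf_inv_into_f intro: continuous_on_subset\<close>)
    then have "continuous (at y within {0..g x}) ?h"
      using Kinf_image_atLeastAtMost[OF g x(1)] x y
      by (simp add: continuous_on_eq_continuous_within)
    moreover have "at y within {0..} = at y within {0..g x}"
      by (rule at_within_nhd[of _ "{..<g x}"]) (use x in auto)
    ultimately show "continuous (at y within {0..}) ?h" by simp
  qed
  show "strict_mono_on {0..} ?h"
    by (rule strict_mono_onI)
       (use g in \<open>auto simp: Kinf_inv_into_less_iff Kinf_inv_into_nonneg Kinf_f_inv_into\<close>)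
  show "?h 0 = 0"
    using Kinf_inv_into_f[OF g, of 0] Kinf_0[OF g] by simp
  show "0 \<le> ?h r" if "0 \<le> r" for r
    using Kinf_inv_into_nonneg[OF g that] .
  show "\<exists>r\<ge>0. M < ?h r" for M
    using Kinf_inv_into_f[OF g, of "\<bar>M\<bar> + 1"] Kinf_nonneg[OF g, of "\<bar>M\<bar> + 1"]
    by (intro exI[of _ "g (\<bar>M\<bar> + 1)"]) auto
qed

lemma Kinf_compose:
  assumes f: "Kinf f" and g: "Kinf g"
  shows "Kinf (f \<circ> g)"
  unfolding Kinf_def
proof (intro conjI allI impI)
  show "continuous_on {0..} (f \<circ> g)"
    by (rule continuous_on_compose)
       (use f g in \<open>auto simp: Kinf_def intro: continuous_on_subset\<close>)
  show "strict_mono_on {0..} (f \<circ> g)"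
    by (rule strict_mono_onI) (use f g in \<open>auto intro: Kinf_less Kinf_nonneg\<close>)
  show "(f \<circ> g) 0 = 0"
    using f g by (simp add: Kinf_0)
  show "0 \<le> (f \<circ> g) r" if "0 \<le> r" for r
    using f g that by (simp add: Kinf_nonneg)
  show "\<exists>r\<ge>0. M < (f \<circ> g) r" for M
  proof -
    obtain y where y: "0 \<le> y" "M < f y" using f unfolding Kinf_def by blast
    show ?thesis
      using Kinf_f_inv_into[OF g y(1)] Kinf_inv_into_nonneg[OF g y(1)] y(2)
      by (intro exI[of _ "inv_into {0..} g y"]) auto
  qed
qed

lemma Kinf_divide:
  assumes g: "Kinf g" and c: "0 < c"
  shows "Kinf (\<lambda>t. g t / c)"
  unfolding Kinf_def
proof (intro conjI allI impI)
  show "continuous_on {0..} (\<lambda>t. g t / c)"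
    using g c unfolding Kinf_def by (auto intro!: continuous_intros)
  show "strict_mono_on {0..} (\<lambda>t. g t / c)"
    by (rule strict_mono_onI) (use Kinf_less[OF g] c in \<open>auto simp: divide_strict_right_mono\<close>)
  show "g 0 / c = 0" using Kinf_0[OF g] by simp
  show "0 \<le> g r / c" if "0 \<le> r" for r using Kinf_nonneg[OF g that] c by simp
  show "\<exists>r\<ge>0. M < g r / c" for M
  proof -
    obtain r where "r \<ge> 0" "M * c < g r" using g unfolding Kinf_def by blast
    then show ?thesis using c by (intro exI[of _ r]) (simp add: pos_less_divide_eq)
  qed
qed

section \<open>Interpolating bi-infinite sequences\<close>

definition lin_interp :: "(int \<Rightarrow> real) \<Rightarrow> real \<Rightarrow> real" where
  "lin_interp f u = f \<lfloor>u\<rfloor> + (u - of_int \<lfloor>u\<rfloor>) * (f (\<lfloor>u\<rfloor> + 1) - f \<lfloor>u\<rfloor>)"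

lemma lin_interp_eq:
  assumes "of_int k \<le> u" "u \<le> of_int k + 1"
  shows "lin_interp f u = f k + (u - of_int k) * (f (k + 1) - f k)"
proof (cases "u < of_int k + 1")
  case True
  then have "\<lfloor>u\<rfloor> = k" using assms by linarith
  then show ?thesis by (simp add: lin_interp_def)
next
  case False
  then have "u = of_int (k + 1)" using assms by simp
  then show ?thesis by (simp add: lin_interp_def)
qed

lemma lin_interp_of_int [simp]: "lin_interp f (of_int k) = f k"
  by (simp add: lin_interp_def)

lemma lin_interp_affine:
  "lin_interp (\<lambda>k. c * f k + d * of_int k) u = c * lin_interp f u + d * u"
  by (simp add: lin_interp_def algebra_simps)

lemma lin_interp_mono_seq:
  assumes "\<And>k. f k \<le> g k"
  shows "lin_interp f u \<le> lin_interp g u"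
proof -
  define t where "t = u - of_int \<lfloor>u\<rfloor>"
  have t: "0 \<le> t" "t \<le> 1" unfolding t_def by linarith+
  have "lin_interp h u = (1 - t) * h \<lfloor>u\<rfloor> + t * h (\<lfloor>u\<rfloor> + 1)" for h
    unfolding lin_interp_def t_def by (simp add: algebra_simps)
  then show ?thesis
    using t assms by (simp add: add_mono mult_left_mono)
qed

lemma isCont_lin_interp: "isCont (lin_interp f) u"
proof -
  define k where "k = \<lfloor>u\<rfloor>"
  have piece: "continuous_on {of_int j..of_int (j + 1)} (lin_interp f)" for j
  proof -
    have "continuous_on {of_int j..of_int (j + 1)} (\<lambda>u. f j + (u - of_int j) * (f (j + 1) - f j))"
      by (intro continuous_intros)
    then show ?thesis
      by (rule continuous_on_eq) (use lin_interp_eq[of j] in auto)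
  qed
  have "continuous_on ({of_int (k - 1)..of_int k} \<union> {of_int k..of_int (k + 1)}) (lin_interp f)"
    using continuous_on_closed_Un[OF _ _ piece[of "k - 1"] piece[of k]] by simp
  moreover have "{of_int (k - 1)..of_int k} \<union> {of_int k..of_int (k + 1)} = {of_int (k - 1)..of_int (k + 1)::real}"
    by auto
  moreover have "u \<in> interior {of_int (k - 1)..of_int (k + 1)::real}"
    unfolding k_def by simp linarith
  ultimately show ?thesis using continuous_on_interior by metis
qed

lemma lin_interp_piece_bounds:
  assumes "f k \<le> f (k + 1)" "of_int k \<le> u" "u \<le> of_int k + 1"
  shows "f k \<le> lin_interp f u" "lin_interp f u \<le> f (k + 1)"
proof -
  have "0 \<le> (u - of_int k) * (f (k + 1) - f k)"
    using assms by simp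
  moreover have "(u - of_int k) * (f (k + 1) - f k) \<le> 1 * (f (k + 1) - f k)"
    using assms by (intro mult_right_mono) auto
  ultimately
  show "f k \<le> lin_interp f u" "lin_interp f u \<le> f (k + 1)"
    using lin_interp_eq[OF assms(2,3)] by simp_all
qed

lemma lin_interp_mono_on:
  assumes step: "\<And>k. a \<le> k \<Longrightarrow> k < b \<Longrightarrow> f k \<le> f (k + 1)"
    and u: "of_int a \<le> u" and uv: "u \<le> v" and v: "v \<le> of_int b"
  shows "lin_interp f u \<le> lin_interp f v"
proof -
  have mono: "f k \<le> f l" if "a \<le> k" "k \<le> l" "l \<le> b" for k l
    using that(2,3) by (induction l rule: int_ge_induct) (use that(1) step in \<open>auto intro: order_trans\<close>)
  define p q where "p = \<lfloor>u\<rfloor>" and "q = \<lfloor>v\<rfloor>"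
  have pq: "a \<le> p" "p \<le> q" "q \<le> b" "of_int p \<le> u" "u < of_int p + 1" "of_int q \<le> v" "v < of_int q + 1"
    unfolding p_def q_def using u uv v by linarith+
  show ?thesis
  proof (cases "p = q")
    case True
    have "q < b \<or> u = v"
    proof (cases "q = b")
      case True
      then have "of_int p = (of_int b :: real)" using \<open>p = q\<close> by simp
      then show ?thesis using pq v uv by linarith
    qed (use pq in simp)
    have diff: "lin_interp f v - lin_interp f u = (v - u) * (f (p + 1) - f p)"
      using lin_interp_eq[of p u f] lin_interp_eq[of p v f] pq True by (simp add: algebra_simps)
    show ?thesis
    proof (cases "u = v")
      case False
      then have "0 \<le> (v - u) * (f (p + 1) - f p)"
        using \<open>q < b \<or> u = v\<close> step[of p] pq uv True by simp
      then show ?thesis using diff by simp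
    qed simp
  next
    case False
    have "lin_interp f u \<le> f (p + 1)"
      using lin_interp_piece_bounds(2)[of f p u] step[of p] pq False by simp
    moreover have "f q \<le> lin_interp f v"
    proof (cases "q = b")
      case True
      then have "v = of_int q" using pq v by linarith
      then show ?thesis by simp
    next
      case False
      then show ?thesis using lin_interp_piece_bounds(1)[of f q v] step[of q] pq by simp
    qed
    ultimately show ?thesis using mono[of "p + 1" q] pq False by linarith
  qed
qed

text \<open>Subtracting a linear function from the sequence commutes with interpolation
  (\<open>lin_interp_affine\<close>), so slope bounds reduce to monotonicity.\<close>

lemma lin_interp_slope_bounds:
  assumes step: "\<And>k. a \<le> k \<Longrightarrow> k < b \<Longrightarrow> m \<le> f (k + 1) - f k \<and> f (k + 1) - f k \<le> M"
    and uv: "of_int a \<le> u" "u \<le> v" "v \<le> of_int b"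
  shows "m * (v - u) \<le> lin_interp f v - lin_interp f u \<and> lin_interp f v - lin_interp f u \<le> M * (v - u)"
proof -
  have "lin_interp (\<lambda>k. 1 * f k + (- m) * of_int k) u \<le> lin_interp (\<lambda>k. 1 * f k + (- m) * of_int k) v"
    by (rule lin_interp_mono_on[OF _ uv]) (use step in \<open>auto simp: algebra_simps\<close>)
  moreover have "lin_interp (\<lambda>k. (- 1) * f k + M * of_int k) u \<le> lin_interp (\<lambda>k. (- 1) * f k + M * of_int k) v"
    by (rule lin_interp_mono_on[OF _ uv]) (use step in \<open>auto simp: algebra_simps\<close>)
  ultimately show ?thesis unfolding lin_interp_affine by (simp add: algebra_simps)
qed

lemma lin_interp_abs_slope_bounds:
  assumes step: "\<And>k. a \<le> k \<Longrightarrow> k < b \<Longrightarrow> m \<le> f (k + 1) - f k \<and> f (k + 1) - f k \<le> M"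
    and m: "0 \<le> m"
    and u: "of_int a \<le> u" "u \<le> of_int b" and v: "of_int a \<le> v" "v \<le> of_int b"
  shows "m * \<bar>v - u\<bar> \<le> \<bar>lin_interp f v - lin_interp f u\<bar>
    \<and> \<bar>lin_interp f v - lin_interp f u\<bar> \<le> M * \<bar>v - u\<bar>"
proof (cases "u \<le> v")
  case True
  moreover have "0 \<le> m * (v - u)" using True m by simp
  ultimately show ?thesis using lin_interp_slope_bounds[of a b m f M, OF step u(1) True v(2)] by (simp add: abs_of_nonneg)
next
  case False
  then have "v \<le> u" "0 \<le> m * (u - v)" using m by simp_all
  then show ?thesis using lin_interp_slope_bounds[of a b m f M, OF step v(1) \<open>v \<le> u\<close> u(2)]
    by (simp add: abs_of_nonneg abs_minus_commute)
qed

lemma increments_bounds: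
  fixes f :: "int \<Rightarrow> real"
  assumes step: "\<And>k. f k < f (k + 1)" and "a < b"
  obtains m M where "0 < m" "m \<le> M" "\<And>k. a \<le> k \<Longrightarrow> k < b \<Longrightarrow> m \<le> f (k + 1) - f k \<and> f (k + 1) - f k \<le> M"
proof -
  define D where "D = (\<lambda>k. f (k + 1) - f k) ` {a..<b}"
  have D: "finite D" "D \<noteq> {}" unfolding D_def using \<open>a < b\<close> by auto
  have "0 < Min D" using D step unfolding D_def by auto
  moreover have "Min D \<le> Max D" using D by simp
  moreover have "Min D \<le> f (k + 1) - f k \<and> f (k + 1) - f k \<le> Max D" if "a \<le> k" "k < b" for k
    using D that unfolding D_def by auto
  ultimately show ?thesis using that by blast
qed

lemma strict_mono_lin_interp:
  assumes step: "\<And>k. f k < f (k + 1)"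
  shows "strict_mono (lin_interp f)"
proof (rule strict_monoI)
  fix u v :: real assume "u < v"
  define a b where "a = \<lfloor>u\<rfloor>" and "b = \<lfloor>v\<rfloor> + 1"
  have "a < b" unfolding a_def b_def using \<open>u < v\<close> by linarith
  then obtain m M where "0 < m" and slopes: "\<And>k. a \<le> k \<Longrightarrow> k < b \<Longrightarrow> m \<le> f (k + 1) - f k \<and> f (k + 1) - f k \<le> M"
    using increments_bounds[of f, OF step] by metis
  have "m * (v - u) \<le> lin_interp f v - lin_interp f u"
    using lin_interp_slope_bounds[of a b m f M u v] slopes \<open>u < v\<close> unfolding a_def b_def by simp
  moreover have "0 < m * (v - u)" using \<open>0 < m\<close> \<open>u < v\<close> by simp
  ultimately show "lin_interp f u < lin_interp f v" by simp
qed

lemma lin_interp_floor_bounds: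
  assumes "\<And>k. f k \<le> f (k + 1)"
  shows "f \<lfloor>u\<rfloor> \<le> lin_interp f u" "lin_interp f u \<le> f (\<lfloor>u\<rfloor> + 1)"
proof -
  have "of_int \<lfloor>u\<rfloor> \<le> u" "u \<le> of_int \<lfloor>u\<rfloor> + 1" by linarith+
  then show "f \<lfloor>u\<rfloor> \<le> lin_interp f u" "lin_interp f u \<le> f (\<lfloor>u\<rfloor> + 1)"
    using lin_interp_piece_bounds[of f "\<lfloor>u\<rfloor>" u, OF assms] by blast+
qed

definition log_interp :: "(int \<Rightarrow> real) \<Rightarrow> real \<Rightarrow> real" where
  "log_interp f r = (if r \<le> 0 then 0 else lin_interp f (ln r))"

lemma log_interp_mono_seq: "(\<And>k. f k \<le> g k) \<Longrightarrow> log_interp f r \<le> log_interp g r"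
  by (simp add: log_interp_def lin_interp_mono_seq)

lemma log_interp_floor_bounds:
  assumes "\<And>k. f k \<le> f (k + 1)" "0 < r"
  shows "f \<lfloor>ln r\<rfloor> \<le> log_interp f r" "log_interp f r \<le> f (\<lfloor>ln r\<rfloor> + 1)"
  using lin_interp_floor_bounds[of f "ln r", OF assms(1)] assms(2) by (simp_all add: log_interp_def)

definition bi_lipschitz_on :: "real set \<Rightarrow> real \<Rightarrow> real \<Rightarrow> (real \<Rightarrow> real) \<Rightarrow> bool" where
  "bi_lipschitz_on K l L h \<longleftrightarrow>
     (\<forall>x\<in>K. \<forall>y\<in>K. l * \<bar>x - y\<bar> \<le> \<bar>h x - h y\<bar> \<and> \<bar>h x - h y\<bar> \<le> L * \<bar>x - y\<bar>)"

lemma bi_lipschitz_on_uniform: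
  fixes h :: "'i::finite \<Rightarrow> real \<Rightarrow> real"
  assumes "\<And>i. \<exists>l L. 0 < l \<and> l \<le> L \<and> bi_lipschitz_on K l L (h i)"
  shows "\<exists>l L. 0 < l \<and> l \<le> L \<and> (\<forall>i. bi_lipschitz_on K l L (h i))"
proof -
  obtain l L where lL: "\<And>i. 0 < l i \<and> l i \<le> L i \<and> bi_lipschitz_on K (l i) (L i) (h i)"
    using assms by metis
  have weaken: "bi_lipschitz_on K l' L' (h i)" if "0 \<le> l'" "l' \<le> l i" "L i \<le> L'" for i l' L'
    using lL[of i] that unfolding bi_lipschitz_on_def
    by (meson abs_ge_zero mult_right_mono order_trans)
  have Min: "Min (range l) \<le> l i" and Max: "L i \<le> Max (range L)" for i
    by (rule Min_le Max_ge; simp)+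
  have pos: "0 < Min (range l)" using lL by (simp add: Min_gr_iff)
  moreover have "Min (range l) \<le> Max (range L)"
    using Min Max lL by (meson order_trans)
  moreover have "\<forall>i. bi_lipschitz_on K (Min (range l)) (Max (range L)) (h i)"
    using weaken[OF less_imp_le[OF pos] Min Max] by blast
  ultimately show ?thesis by blast
qed

lemma exp_abs_diff_bounds:
  fixes u v :: real
  assumes "c \<le> u" "u \<le> d" "c \<le> v" "v \<le> d"
  shows "exp c * \<bar>v - u\<bar> \<le> \<bar>exp v - exp u\<bar> \<and> \<bar>exp v - exp u\<bar> \<le> exp d * \<bar>v - u\<bar>"
proof -
  have ordered: "exp c * (y - x) \<le> exp y - exp x \<and> exp y - exp x \<le> exp d * (y - x)"
    if "c \<le> x" "x \<le> y" "y \<le> d" for x y :: real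
  proof -
    have "exp x * (1 + (y - x)) \<le> exp x * exp (y - x)" and "exp y * (1 + (x - y)) \<le> exp y * exp (x - y)"
      by (intro mult_left_mono exp_ge_add_one_self exp_ge_zero)+
    then have "exp x * (y - x) \<le> exp y - exp x" "exp y - exp x \<le> exp y * (y - x)"
      by (simp_all add: exp_diff algebra_simps)
    moreover have "exp c * (y - x) \<le> exp x * (y - x)" "exp y * (y - x) \<le> exp d * (y - x)"
      using that by (intro mult_right_mono; simp)+
    ultimately show ?thesis by linarith
  qed
  show ?thesis
  proof (cases "u \<le> v")
    case True
    then show ?thesis using ordered[of u v] assms by (simp add: abs_of_nonneg)
  next
    case False
    then show ?thesis using ordered[of v u] assms by (simp add: abs_of_nonpos)
  qed
qed

locale kinf_sequence =
  fixes f :: "int \<Rightarrow> real"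
  assumes step_less: "\<And>k. f k < f (k + 1)"
    and tendsto_0: "(\<lambda>n. f (- int n)) \<longlonglongrightarrow> 0"
    and unbounded: "\<And>M. \<exists>k. M < f k"
begin

lemma strict_mono_seq: "strict_mono f"
proof (rule strict_monoI)
  fix k l :: int assume "k < l"
  then show "f k < f l"
    by (induction l rule: int_gr_induct) (auto intro: step_less less_trans)
qed

lemma step_le: "f k \<le> f (k + 1)"
  using step_less less_imp_le by blast

lemma mono_seq: "k \<le> l \<Longrightarrow> f k \<le> f l"
  using strict_mono_seq by (simp add: strict_mono_less_eq)

lemma seq_pos: "0 < f k"
proof -
  have "0 \<le> f (k - 1)"
    by (rule LIMSEQ_le_const2[OF tendsto_0]) (auto intro!: exI[of _ "nat (1 - k)"] mono_seq)
  then show ?thesis using step_less[of "k - 1"] by simp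
qed

lemma lin_interp_tendsto_at_bot: "(lin_interp f \<longlongrightarrow> 0) at_bot"
proof (rule order_tendstoI)
  have bounds: "0 < lin_interp f u" "lin_interp f u \<le> f (\<lfloor>u\<rfloor> + 1)" for u
    using lin_interp_floor_bounds[of f u, OF step_le] seq_pos[of "\<lfloor>u\<rfloor>"] by auto
  show "\<forall>\<^sub>F u in at_bot. a < lin_interp f u" if "a < 0" for a
    using bounds that by (auto intro: always_eventually less_trans)
  show "\<forall>\<^sub>F u in at_bot. lin_interp f u < e" if e: "0 < e" for e
  proof -
    obtain N where "f (- int N) < e"
      using order_tendstoD(2)[OF tendsto_0 e] by (auto simp: eventually_sequentially)
    moreover have "f (\<lfloor>u\<rfloor> + 1) \<le> f (- int N)" if "u \<le> - real N - 1" for u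
      using that by (intro mono_seq) linarith
    ultimately show ?thesis
      using bounds unfolding eventually_at_bot_linorder by (meson le_less_trans order_trans)
  qed
qed

lemma log_interp_pos: "0 < r \<Longrightarrow> 0 < log_interp f r"
  using lin_interp_floor_bounds(1)[of f "ln r", OF step_le] seq_pos[of "\<lfloor>ln r\<rfloor>"]
  by (auto simp: log_interp_def)

lemma continuous_on_log_interp: "continuous_on {0..} (log_interp f)"
  unfolding continuous_on_eq_continuous_within
proof
  fix x :: real assume "x \<in> {0..}"
  show "continuous (at x within {0..}) (log_interp f)"
  proof (cases "x = 0")
    case True
    have "((\<lambda>r. lin_interp f (ln r)) \<longlongrightarrow> 0) (at_right 0)"
      by (rule filterlim_compose[OF lin_interp_tendsto_at_bot ln_at_0])
    moreover have "\<forall>\<^sub>F r in at_right 0. log_interp f r = lin_interp f (ln r)"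
      using eventually_at_right_less by (rule eventually_mono) (simp add: log_interp_def)
    ultimately have "(log_interp f \<longlongrightarrow> log_interp f 0) (at_right 0)"
      by (simp add: tendsto_cong log_interp_def[of f 0])
    then show ?thesis
      using True by (simp add: continuous_within at_within_Ici_at_right)
  next
    case False
    have "continuous_on {0<..} (\<lambda>r. lin_interp f (ln r))"
      by (intro continuous_at_imp_continuous_on ballI isCont_o2[OF isCont_ln isCont_lin_interp]) auto
    then have "continuous_on {0<..} (log_interp f)"
      by (rule continuous_on_eq) (simp add: log_interp_def)
    then have "isCont (log_interp f) x"
      using False \<open>x \<in> {0..}\<close> by (simp add: continuous_on_eq_continuous_at)
    then show ?thesis by (rule continuous_at_imp_continuous_within)
  qed
qed

lemma Kinf_log_interp: "Kinf (log_interp f)"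
  unfolding Kinf_def
proof (intro conjI allI impI)
  show "continuous_on {0..} (log_interp f)" by (rule continuous_on_log_interp)
  show "strict_mono_on {0..} (log_interp f)"
  proof (rule strict_mono_onI)
    fix r s :: real assume "r \<in> {0..}" "r < s"
    then show "log_interp f r < log_interp f s"
      using log_interp_pos[of s] strict_mono_lin_interp[of f, OF step_less]
      by (cases "r = 0") (auto simp: log_interp_def strict_mono_def)
  qed
  show "log_interp f 0 = 0" by (simp add: log_interp_def)
  show "0 \<le> log_interp f r" for r
    using log_interp_pos[of r] by (cases "r \<le> 0") (auto simp: log_interp_def)
  show "\<exists>r\<ge>0. M < log_interp f r" for M
  proof -
    obtain k where "M < f k" using unbounded by blast
    then show ?thesis by (intro exI[of _ "exp (of_int k)"]) (simp add: log_interp_def)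
  qed
qed

lemma inverse_log_interp:
  assumes "0 < r"
  shows "0 < inv_into {0..} (log_interp f) r" "lin_interp f (ln (inv_into {0..} (log_interp f) r)) = r"
proof -
  have "0 \<le> inv_into {0..} (log_interp f) r" "log_interp f (inv_into {0..} (log_interp f) r) = r"
    using Kinf_inv_into_nonneg Kinf_f_inv_into Kinf_log_interp assms by auto
  then show "0 < inv_into {0..} (log_interp f) r" "lin_interp f (ln (inv_into {0..} (log_interp f) r)) = r"
    using assms by (auto simp: log_interp_def split: if_splits)
qed

text \<open>The inverse is the exponential of the piecewise linear inverse of the sequence, and on a
  compact part of the positive axis only finitely many slopes of the sequence occur.\<close>

lemma bi_lipschitz_inverse_log_interp:
  assumes K: "compact K" "K \<subseteq> {0<..}"
  shows "\<exists>l L. 0 < l \<and> l \<le> L \<and> bi_lipschitz_on K l L (inv_into {0..} (log_interp f))"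
proof (cases "K = {}")
  case True
  then show ?thesis by (intro exI[of _ 1]) (auto simp: bi_lipschitz_on_def)
next
  case False
  define h where "h = inv_into {0..} (log_interp f)"
  have h: "0 < h r" "lin_interp f (ln (h r)) = r" if "r \<in> K" for r
    using inverse_log_interp K(2) that unfolding h_def by auto
  obtain a b where a: "a \<in> K" "\<And>t. t \<in> K \<Longrightarrow> a \<le> t" and b: "b \<in> K" "\<And>t. t \<in> K \<Longrightarrow> t \<le> b"
    using compact_attains_inf[OF K(1) False] compact_attains_sup[OF K(1) False] by metis
  define c d where "c = ln (h a)" and "d = ln (h b)"
  have ln_h: "c \<le> ln (h r)" "ln (h r) \<le> d" if "r \<in> K" for r
    unfolding c_def d_def using h a b that K(2) Kinf_mono[OF Kinf_inverse[OF Kinf_log_interp]]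
    by (auto simp: h_def less_imp_le subset_eq)
  then have "c \<le> d" "\<lfloor>c\<rfloor> < \<lfloor>d\<rfloor> + 1" using a(1) by (auto intro: order_trans floor_mono)
  then obtain m M where mM: "0 < m" "m \<le> M"
    and slopes: "\<And>k. \<lfloor>c\<rfloor> \<le> k \<Longrightarrow> k < \<lfloor>d\<rfloor> + 1 \<Longrightarrow> m \<le> f (k + 1) - f k \<and> f (k + 1) - f k \<le> M"
    using increments_bounds[of f, OF step_less] by metis
  have "bi_lipschitz_on K (exp c / M) (exp d / m) h"
    unfolding bi_lipschitz_on_def
  proof (intro ballI)
    fix r1 r2 assume r: "r1 \<in> K" "r2 \<in> K"
    define u1 u2 where "u1 = ln (h r1)" and "u2 = ln (h r2)"
    have u: "c \<le> u1" "u1 \<le> d" "c \<le> u2" "u2 \<le> d"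
      unfolding u1_def u2_def using ln_h r by auto
    then have "m * \<bar>u1 - u2\<bar> \<le> \<bar>r1 - r2\<bar> \<and> \<bar>r1 - r2\<bar> \<le> M * \<bar>u1 - u2\<bar>"
      using lin_interp_abs_slope_bounds[of "\<lfloor>c\<rfloor>" "\<lfloor>d\<rfloor> + 1" m f M u2 u1] slopes mM
        h(2)[OF r(1)] h(2)[OF r(2)] unfolding u1_def u2_def by simp linarith
    moreover have "exp c * \<bar>u1 - u2\<bar> \<le> \<bar>h r1 - h r2\<bar> \<and> \<bar>h r1 - h r2\<bar> \<le> exp d * \<bar>u1 - u2\<bar>"
      using exp_abs_diff_bounds[of c u2 d u1] u h(1)[OF r(1)] h(1)[OF r(2)] unfolding u1_def u2_def by simp
    ultimately show "exp c / M * \<bar>r1 - r2\<bar> \<le> \<bar>h r1 - h r2\<bar> \<and> \<bar>h r1 - h r2\<bar> \<le> exp d / m * \<bar>r1 - r2\<bar>"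
      using mM by (auto simp: field_simps intro: order_trans[OF mult_left_mono])
  qed
  moreover have "exp c / M \<le> exp d / m"
    using mM \<open>c \<le> d\<close> by (intro frac_le) auto
  ultimately show ?thesis using mM unfolding h_def by (intro exI conjI) auto
qed

end

lemma kinf_sequence_Min:
  fixes f :: "'i::finite \<Rightarrow> int \<Rightarrow> real"
  assumes f: "\<And>i. kinf_sequence (f i)"
  shows "kinf_sequence (\<lambda>k. Min (range (\<lambda>i. f i k)))" (is "kinf_sequence ?g")
proof
  have le: "?g k \<le> f i k" for k i by (rule Min_le) simp_all
  have attained: "\<exists>i. ?g k = f i k" for k
  proof -
    have "?g k \<in> range (\<lambda>i. f i k)" by (rule Min_in) simp_all
    then show ?thesis by (rule rangeE) blast
  qed
  show "?g k < ?g (k + 1)" for k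
  proof -
    obtain i where "?g (k + 1) = f i (k + 1)" using attained by blast
    then show ?thesis using order_le_less_trans[OF le[of k i] kinf_sequence.step_less[OF f, of i k]] by simp
  qed
  have "0 \<le> ?g k" for k
  proof -
    obtain i where "?g k = f i k" using attained by blast
    then show ?thesis using kinf_sequence.seq_pos[OF f, of i k] by simp
  qed
  then show "(\<lambda>n. ?g (- int n)) \<longlonglongrightarrow> 0"
    by (intro tendsto_sandwich[OF _ _ tendsto_const kinf_sequence.tendsto_0[OF f[of undefined]]])
       (use le in \<open>auto intro: always_eventually\<close>)
  show "\<exists>k. M < ?g k" for M
  proof -
    have "\<forall>i. \<exists>k. M < f i k" using kinf_sequence.unbounded[OF f] by blast
    then obtain k where k: "\<forall>i. M < f i (k i)" by (rule choice[THEN exE])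
    define K where "K = Max (range k)"
    obtain i where "?g K = f i K" using attained by blast
    moreover have "f i (k i) \<le> f i K"
      unfolding K_def by (rule kinf_sequence.mono_seq[OF f]) simp
    ultimately show ?thesis using k by (metis less_le_trans)
  qed
qed

lemma kinf_sequence_Max:
  fixes f :: "'i::finite \<Rightarrow> int \<Rightarrow> real"
  assumes f: "\<And>i. kinf_sequence (f i)"
  shows "kinf_sequence (\<lambda>k. Max (range (\<lambda>i. f i k)))" (is "kinf_sequence ?g")
proof
  have ge: "f i k \<le> ?g k" for k i by (rule Max_ge) simp_all
  have attained: "\<exists>i. ?g k = f i k" for k
  proof -
    have "?g k \<in> range (\<lambda>i. f i k)" by (rule Max_in) simp_all
    then show ?thesis by (rule rangeE) blast
  qed
  have pos: "0 \<le> f i k" for i k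
    using kinf_sequence.seq_pos[OF f] less_imp_le by blast
  show "?g k < ?g (k + 1)" for k
  proof -
    obtain i where "?g k = f i k" using attained by blast
    then show ?thesis using order_less_le_trans[OF kinf_sequence.step_less[OF f, of i k] ge[of i "k + 1"]] by simp
  qed
  have le_sum: "?g k \<le> (\<Sum>i\<in>UNIV. f i k)" for k
  proof -
    obtain i where "?g k = f i k" using attained by blast
    also have "\<dots> \<le> (\<Sum>i\<in>UNIV. f i k)" by (rule member_le_sum) (simp_all add: pos)
    finally show ?thesis .
  qed
  have sum_lim: "(\<lambda>n. \<Sum>i\<in>UNIV. f i (- int n)) \<longlonglongrightarrow> 0"
    by (rule tendsto_null_sum) (rule kinf_sequence.tendsto_0[OF f])
  have nonneg: "0 \<le> ?g k" for k
    using pos[of undefined k] ge[of undefined k] by linarith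
  show "(\<lambda>n. ?g (- int n)) \<longlonglongrightarrow> 0"
  proof (rule tendsto_sandwich[OF _ _ tendsto_const sum_lim])
    show "\<forall>\<^sub>F n in sequentially. 0 \<le> ?g (- int n)" using nonneg by simp
    show "\<forall>\<^sub>F n in sequentially. ?g (- int n) \<le> (\<Sum>i\<in>UNIV. f i (- int n))" using le_sum by simp
  qed
  show "\<exists>k. M < ?g k" for M
  proof -
    obtain k where "M < f undefined k" using kinf_sequence.unbounded[OF f] by blast
    then show ?thesis using ge[of undefined k] by (intro exI[of _ k]) linarith
  qed
qed

section \<open>Concatenating chains\<close>

text \<open>\<open>chain_pos len k = (n, j)\<close>: the \<open>k\<close>-th element of the concatenation is element \<open>j\<close> of
  piece \<open>n\<close>, where piece \<open>n\<close> has \<open>len n\<close> steps and its last element is the first of piece \<open>n + 1\<close>.\<close>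

primrec chain_pos :: "(nat \<Rightarrow> nat) \<Rightarrow> nat \<Rightarrow> nat \<times> nat" where
  "chain_pos len 0 = (0, 0)"
| "chain_pos len (Suc k) =
     (case chain_pos len k of (n, j) \<Rightarrow> if Suc j < len n then (n, Suc j) else (Suc n, 0))"

lemma chain_pos_offset_less:
  assumes "\<And>n. 0 < len n"
  shows "snd (chain_pos len k) < len (fst (chain_pos len k))"
  using assms by (induction k) (auto split: prod.splits)

lemma chain_pos_reaches:
  assumes "\<And>n. 0 < len n"
  shows "\<exists>k. chain_pos len k = (n, 0)"
proof (induction n)
  case 0
  show ?case by (rule exI[of _ 0]) simp
next
  case (Suc n)
  then obtain k where k: "chain_pos len k = (n, 0)" by blast
  have inner: "chain_pos len (k + j) = (n, j)" if "j < len n" for j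
    using that by (induction j) (auto simp: k)
  obtain m where m: "len n = Suc m" using assms[of n] gr0_implies_Suc by blast
  then have "chain_pos len (Suc (k + m)) = (Suc n, 0)"
    using inner[of m] by simp
  then show ?case by blast
qed

lemma chain_through_tranclp:
  assumes "\<And>n. R\<^sup>+\<^sup>+ (a n) (a (Suc n))"
  obtains g where "g 0 = a 0" "\<And>k. R (g k) (g (Suc k))" "\<And>n. \<exists>k. g k = a n"
proof -
  have "\<forall>n. \<exists>l p. 0 < l \<and> p 0 = a n \<and> p l = a (Suc n) \<and> (\<forall>j<l. R (p j) (p (Suc j)))"
    using assms by (simp add: tranclp_power relpowp_fun_conv)
  then obtain len path where len: "\<And>n. 0 < len n"
    and path: "\<And>n. path n 0 = a n" "\<And>n. path n (len n) = a (Suc n)"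
      "\<And>n j. j < len n \<Longrightarrow> R (path n j) (path n (Suc j))"
    by metis
  define g where "g k = (case chain_pos len k of (n, j) \<Rightarrow> path n j)" for k
  show ?thesis
  proof
    show "g 0 = a 0" by (simp add: g_def path)
    show "R (g k) (g (Suc k))" for k
    proof (cases "chain_pos len k")
      case (Pair n j)
      then have j: "j < len n" using chain_pos_offset_less[of len k, OF len] by simp
      show ?thesis
      proof (cases "Suc j < len n")
        case True
        then show ?thesis using Pair path(3)[OF j] by (simp add: g_def)
      next
        case False
        then have "Suc j = len n" using j by simp
        then show ?thesis using Pair False path(3)[OF j] by (simp add: g_def path(1,2))
      qed
    qed
    show "\<exists>k. g k = a n" for n
    proof -
      obtain k where "chain_pos len k = (n, 0)" using chain_pos_reaches[of len n, OF len] by blast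
      then have "g k = a n" by (simp add: g_def path(1))
      then show ?thesis ..
    qed
  qed
qed

lemma int_chain_of_nat_chains:
  assumes "g 0 = b 0" "\<And>k. R (g k) (g (Suc k))" "\<And>m. R (b (Suc m)) (b m)"
  obtains p :: "int \<Rightarrow> 'a" where "\<And>k. R (p k) (p (k + 1))" "\<And>n. p (int n) = g n" "\<And>n. p (- int n) = b n"
proof
  define p where "p k = (if 0 \<le> k then g (nat k) else b (nat (- k)))" for k :: int
  show "p (int n) = g n" for n by (simp add: p_def)
  show p_neg: "p (- int n) = b n" for n
    using assms(1) by (cases n) (simp_all add: p_def nat_add_distrib)
  show "R (p k) (p (k + 1))" for k
  proof (cases "0 \<le> k")
    case True
    then show ?thesis using assms(2)[of "nat k"] by (simp add: p_def nat_add_distrib)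
  next
    case False
    then have "k = - int (Suc (nat (- k - 1)))" by simp
    then obtain m where "k = - int (Suc m)" by blast
    then show ?thesis using assms(3)[of m] p_neg[of m] p_neg[of "Suc m"] by simp
  qed
qed

section \<open>Gain operators\<close>

lemma pos_coneI: "(\<And>i. 0 \<le> s i) \<Longrightarrow> s \<in> pos_cone"
  unfolding pos_cone_def by auto

lemma pos_coneD: "s \<in> pos_cone \<Longrightarrow> 0 \<le> s i"
  unfolding pos_cone_def by auto

lemma abs_le_supnorm: "\<bar>s i\<bar> \<le> supnorm s"
  unfolding supnorm_def by (rule Max_ge) auto

lemma supnorm_leI: "(\<And>i. \<bar>s i\<bar> \<le> C) \<Longrightarrow> supnorm s \<le> C"
  unfolding supnorm_def by (subst Max_le_iff) auto

lemma supnorm_nonneg: "0 \<le> supnorm s"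
  using abs_le_supnorm[of s undefined] by simp

lemma supnorm_const [simp]: "supnorm (\<lambda>_. c) = \<bar>c\<bar>"
  unfolding supnorm_def by simp

lemma supnorm_tendsto_0:
  fixes x :: "nat \<Rightarrow> 'i::finite \<Rightarrow> real"
  assumes "\<And>j. (\<lambda>n. x n j) \<longlonglongrightarrow> y j"
  shows "(\<lambda>n. supnorm (x n - y)) \<longlonglongrightarrow> 0"
proof (rule tendsto_sandwich[OF _ _ tendsto_const])
  show "\<forall>\<^sub>F n in sequentially. 0 \<le> supnorm (x n - y)"
    by (simp add: supnorm_nonneg)
  have "\<bar>x n j - y j\<bar> \<le> (\<Sum>j\<in>UNIV. \<bar>x n j - y j\<bar>)" for n j
    by (rule member_le_sum) auto
  then show "\<forall>\<^sub>F n in sequentially. supnorm (x n - y) \<le> (\<Sum>j\<in>UNIV. \<bar>x n j - y j\<bar>)"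
    by (intro always_eventually allI supnorm_leI) simp
  show "(\<lambda>n. \<Sum>j\<in>UNIV. \<bar>x n j - y j\<bar>) \<longlonglongrightarrow> 0"
    using assms by (intro tendsto_null_sum tendsto_rabs_zero LIM_zero)
qed

locale gain_op =
  fixes Ii :: "'i::finite \<Rightarrow> 'i set"
    and gam :: "'i \<Rightarrow> 'i \<Rightarrow> real \<Rightarrow> real"
    and mu :: "'i \<Rightarrow> ('i \<Rightarrow> real) \<Rightarrow> ereal"
  assumes gain_operator: "gain_operator Ii gam mu"
begin

abbreviation \<Gamma> where "\<Gamma> \<equiv> Gam Ii gam mu"

definition mu_arg :: "'i \<Rightarrow> ('i \<Rightarrow> real) \<Rightarrow> 'i \<Rightarrow> real" where
  "mu_arg i s = (\<lambda>j. if j \<in> Ii i then gam i j (s j) else 0)"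

lemma gam_Kinf: "j \<in> Ii i \<Longrightarrow> Kinf (gam i j)"
proof -
  have "\<forall>i. \<forall>j\<in>Ii i. Kinf (gam i j)"
    using gain_operator unfolding gain_operator_def by (elim conjE) assumption
  then show "j \<in> Ii i \<Longrightarrow> Kinf (gam i j)" by blast
qed

lemma mu_nonneg: "s \<in> pos_cone \<Longrightarrow> 0 \<le> mu i s"
proof -
  have "\<forall>i. \<forall>s\<in>pos_cone. 0 \<le> mu i s"
    using gain_operator unfolding gain_operator_def by (elim conjE) assumption
  then show "s \<in> pos_cone \<Longrightarrow> 0 \<le> mu i s" by blast
qed

lemma mu_zero: "mu i (\<lambda>_. 0) = 0"
proof -
  have "\<exists>\<xi>. Kinf \<xi> \<and> (\<forall>i. mu i (\<lambda>_. 0) = 0 \<and> (\<forall>s\<in>pos_cone. ereal (\<xi> (supnorm s)) \<le> mu i s))"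
    using gain_operator unfolding gain_operator_def by (elim conjE) assumption
  then show ?thesis by (elim exE conjE) simp
qed

lemma mu_mono: "s \<in> pos_cone \<Longrightarrow> s' \<in> pos_cone \<Longrightarrow> s \<le> s' \<Longrightarrow> mu i s \<le> mu i s'"
proof -
  have "\<forall>i. \<forall>s\<in>pos_cone. \<forall>s'\<in>pos_cone. s \<le> s' \<longrightarrow> mu i s \<le> mu i s'"
    using gain_operator unfolding gain_operator_def by (elim conjE) assumption
  then show "s \<in> pos_cone \<Longrightarrow> s' \<in> pos_cone \<Longrightarrow> s \<le> s' \<Longrightarrow> mu i s \<le> mu i s'" by blast
qed

lemma mu_finite: "s \<in> pos_cone \<Longrightarrow> \<bar>mu i s\<bar> \<noteq> \<infinity>"
proof -
  have "\<forall>i. \<forall>J. finite J \<longrightarrow>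
         (\<forall>s\<in>pos_cone. (\<forall>k. k \<notin> J \<longrightarrow> s k = 0) \<longrightarrow> \<bar>mu i s\<bar> \<noteq> \<infinity>)
       \<and> continuous_on {s\<in>pos_cone. \<forall>k. k \<notin> J \<longrightarrow> s k = 0} (mu i)"
    using gain_operator unfolding gain_operator_def by (elim conjE) assumption
  from this[rule_format, where i=i and J=UNIV] show "s \<in> pos_cone \<Longrightarrow> \<bar>mu i s\<bar> \<noteq> \<infinity>"
    by simp
qed

lemma mu_restr_continuous:
  assumes "s0 \<in> pos_cone" "0 < \<epsilon>"
  shows "\<exists>\<delta>>0. \<forall>s\<in>pos_cone. supnorm (s - s0) \<le> \<delta> \<longrightarrow>
      (\<forall>i. \<bar>mu i (restr s (Ii i)) - mu i (restr s0 (Ii i))\<bar> \<le> ereal \<epsilon>)"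
proof -
  have "\<forall>A C \<epsilon>. A \<subseteq> pos_cone \<and> (\<forall>s\<in>A. supnorm s \<le> C) \<and> 0 < \<epsilon> \<longrightarrow>
        (\<exists>\<delta>>0. \<forall>s0\<in>A. \<forall>s\<in>pos_cone. supnorm (s - s0) \<le> \<delta> \<longrightarrow>
            (\<forall>i. \<bar>mu i (restr s (Ii i)) - mu i (restr s0 (Ii i))\<bar> \<le> ereal \<epsilon>))"
    using gain_operator unfolding gain_operator_def by (elim conjE) assumption
  from this[rule_format, of "{s0}" "supnorm s0" \<epsilon>] show ?thesis
    using assms by simp
qed

lemma mu_arg_pos: "s \<in> pos_cone \<Longrightarrow> mu_arg i s \<in> pos_cone"
  unfolding mu_arg_def pos_cone_def using gam_Kinf Kinf_nonneg by auto

lemma mu_arg_mono: "s \<in> pos_cone \<Longrightarrow> s \<le> t \<Longrightarrow> mu_arg i s \<le> mu_arg i t"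
  unfolding mu_arg_def pos_cone_def le_fun_def using gam_Kinf Kinf_mono by auto

lemma ereal_Gam: "s \<in> pos_cone \<Longrightarrow> mu i (mu_arg i s) = ereal (\<Gamma> s i)"
  unfolding Gam_def mu_arg_def[symmetric]
  using mu_finite[OF mu_arg_pos] by (metis abs_ereal.simps(3) ereal_real)

lemma Gam_nonneg: "s \<in> pos_cone \<Longrightarrow> 0 \<le> \<Gamma> s i"
  using mu_nonneg[OF mu_arg_pos, of s i i] ereal_Gam[of s i] by simp

lemma Gam_mono: "s \<in> pos_cone \<Longrightarrow> s \<le> t \<Longrightarrow> \<Gamma> s i \<le> \<Gamma> t i"
proof -
  assume s: "s \<in> pos_cone" and st: "s \<le> t"
  then have t: "t \<in> pos_cone"
    unfolding pos_cone_def le_fun_def by (auto intro: order_trans)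
  have "mu i (mu_arg i s) \<le> mu i (mu_arg i t)"
    by (rule mu_mono[OF mu_arg_pos[OF s] mu_arg_pos[OF t] mu_arg_mono[OF s st]])
  then show ?thesis using ereal_Gam[OF s, of i] ereal_Gam[OF t, of i] by simp
qed

lemma Gam_zero: "\<Gamma> (\<lambda>_. 0) i = 0"
proof -
  have "mu_arg i (\<lambda>_. 0) = (\<lambda>_. 0)" unfolding mu_arg_def using gam_Kinf Kinf_0 by auto
  then show ?thesis unfolding Gam_def mu_arg_def[symmetric] using mu_zero by simp
qed

lemma Gam_rho_mono:
  assumes "Kinf \<rho>" "s \<in> pos_cone" "s \<le> t"
  shows "Gam_rho \<rho> Ii gam mu s \<le> Gam_rho \<rho> Ii gam mu t"
  unfolding Gam_rho_def le_fun_def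
  using Gam_mono[OF assms(2,3)] Kinf_mono[OF assms(1) Gam_nonneg[OF assms(2)]] by (simp add: add_mono)

lemma Gam_tendsto:
  assumes x: "\<And>n. x n \<in> pos_cone" and y: "y \<in> pos_cone"
    and lim: "\<And>j. (\<lambda>n. x n j) \<longlonglongrightarrow> y j"
  shows "(\<lambda>n. \<Gamma> (x n) i) \<longlonglongrightarrow> \<Gamma> y i"
proof (rule LIMSEQ_I)
  fix e :: real assume e: "0 < e"
  have "(\<lambda>n. mu_arg i (x n) j) \<longlonglongrightarrow> mu_arg i y j" for j
  proof (cases "j \<in> Ii i")
    case True
    then show ?thesis
      using Kinf_tendsto[OF gam_Kinf[OF True] pos_coneD[OF x] lim] by (simp add: mu_arg_def)
  qed (simp add: mu_arg_def)
  then have arg_lim: "(\<lambda>n. supnorm (mu_arg i (x n) - mu_arg i y)) \<longlonglongrightarrow> 0"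
    by (rule supnorm_tendsto_0)
  obtain d where "0 < d" and close: "\<forall>s\<in>pos_cone. supnorm (s - mu_arg i y) \<le> d \<longrightarrow>
      (\<forall>i'. \<bar>mu i' (restr s (Ii i')) - mu i' (restr (mu_arg i y) (Ii i'))\<bar> \<le> ereal (e / 2))"
    using mu_restr_continuous[OF mu_arg_pos[OF y, of i] half_gt_zero[OF e]] by blast
  have "\<forall>\<^sub>F n in sequentially. supnorm (mu_arg i (x n) - mu_arg i y) < d"
    using order_tendstoD(2)[OF arg_lim \<open>0 < d\<close>] .
  then obtain N where N: "\<And>n. N \<le> n \<Longrightarrow> supnorm (mu_arg i (x n) - mu_arg i y) < d"
    unfolding eventually_sequentially by blast
  have restr_arg: "restr (mu_arg i s) (Ii i) = mu_arg i s" for s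
    unfolding mu_arg_def restr_def by auto
  have bound: "\<bar>\<Gamma> (x n) i - \<Gamma> y i\<bar> \<le> e / 2" if "N \<le> n" for n
  proof -
    have "\<bar>mu i (mu_arg i (x n)) - mu i (mu_arg i y)\<bar> \<le> ereal (e / 2)"
      using close[rule_format, OF mu_arg_pos[OF x[of n]] less_imp_le[OF N[OF that]], of i]
      by (simp add: restr_arg)
    then show ?thesis using ereal_Gam[OF x[of n], of i] ereal_Gam[OF y, of i] by simp
  qed
  show "\<exists>N. \<forall>n\<ge>N. norm (\<Gamma> (x n) i - \<Gamma> y i) < e"
  proof (intro exI allI impI)
    fix n assume "N \<le> n"
    then show "norm (\<Gamma> (x n) i - \<Gamma> y i) < e" using bound[of n] e by simp
  qed
qed

lemma Gam_rho_tendsto: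
  assumes \<rho>: "Kinf \<rho>" and x: "\<And>n. x n \<in> pos_cone" and y: "y \<in> pos_cone"
    and lim: "\<And>j. (\<lambda>n. x n j) \<longlonglongrightarrow> y j"
  shows "(\<lambda>n. Gam_rho \<rho> Ii gam mu (x n) i) \<longlonglongrightarrow> Gam_rho \<rho> Ii gam mu y i"
  unfolding Gam_rho_def
  using Gam_tendsto[OF x y lim] Kinf_tendsto[OF \<rho> Gam_nonneg[OF x]]
  by (intro tendsto_add) auto

end

section \<open>From a path of strict decay to the MBI property\<close>

lemma touching_level:
  fixes \<sigma> :: "real \<Rightarrow> 'i::finite \<Rightarrow> real"
  assumes \<sigma>: "\<And>i. Kinf (\<lambda>r. \<sigma> r i)" and s: "s \<in> pos_cone"
  obtains r k where "0 \<le> r" "s \<le> \<sigma> r" "s k = \<sigma> r k"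
proof -
  define \<tau> where "\<tau> i = inv_into {0..} (\<lambda>r. \<sigma> r i) (s i)" for i
  have \<tau>: "0 \<le> \<tau> i" "\<sigma> (\<tau> i) i = s i" for i
    unfolding \<tau>_def using Kinf_inv_into_nonneg[OF \<sigma> pos_coneD[OF s]] Kinf_f_inv_into[OF \<sigma> pos_coneD[OF s]]
    by auto
  have "Max (range \<tau>) \<in> range \<tau>" by (rule Max_in) auto
  then obtain k where k: "\<tau> k = Max (range \<tau>)" by (metis rangeE)
  have "s i \<le> \<sigma> (\<tau> k) i" for i
    using \<tau> Kinf_mono[OF \<sigma>, of "\<tau> i" "\<tau> k" i] k by simp
  then show ?thesis using that[of "\<tau> k" k] \<tau> by (simp add: le_fun_def)
qed

context gain_op
begin

lemma touching_half_decay_zero: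
  assumes \<rho>: "Kinf \<rho>" and dec: "Gam_rho \<rho> Ii gam mu x \<le> x"
    and s: "s \<in> pos_cone" "s \<le> x" "s k = x k"
    and half: "s k \<le> Gam_rho (\<lambda>t. \<rho> t / 2) Ii gam mu s k"
  shows "x k = 0"
proof -
  define g where "g = \<Gamma> x k"
  have "\<Gamma> s k \<le> g" unfolding g_def by (rule Gam_mono[OF s(1,2)])
  then have "s k \<le> g + \<rho> g / 2"
    using half Kinf_mono[OF \<rho> Gam_nonneg[OF s(1)] \<open>\<Gamma> s k \<le> g\<close>] by (simp add: Gam_rho_def)
  moreover have "g + \<rho> g \<le> s k"
    using dec s(3) by (simp add: Gam_rho_def le_fun_def g_def)
  moreover have "0 \<le> g"
    using Gam_nonneg[OF s(1), of k] \<open>\<Gamma> s k \<le> g\<close> by simp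
  ultimately have "g = 0"
    using Kinf_pos[OF \<rho>, of g] by fastforce
  then show ?thesis
    using \<open>g + \<rho> g \<le> s k\<close> \<open>s k \<le> g + \<rho> g / 2\<close> Kinf_0[OF \<rho>] s(3) by simp
qed

lemma MBI_of_path_strict_decay:
  assumes "path_strict_decay Ii gam mu \<sigma>"
  shows "\<exists>\<rho>. Kinf \<rho> \<and> max_MBI (Gam_rho \<rho> Ii gam mu)"
proof -
  obtain \<rho> \<phi>min \<phi>max where \<rho>: "Kinf \<rho>" and dec: "\<And>r. 0 \<le> r \<Longrightarrow> Gam_rho \<rho> Ii gam mu (\<sigma> r) \<le> \<sigma> r"
    and \<phi>: "Kinf \<phi>min" "Kinf \<phi>max" and bounds: "\<And>r i. 0 \<le> r \<Longrightarrow> \<phi>min r \<le> \<sigma> r i \<and> \<sigma> r i \<le> \<phi>max r"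
    and \<sigma>: "\<And>i. Kinf (\<lambda>r. \<sigma> r i)"
    using assms unfolding path_strict_decay_def by (elim conjE exE) (metis that)
  define \<phi> where "\<phi> = \<phi>max \<circ> inv_into {0..} \<phi>min"
  have gain: "supnorm s \<le> \<phi> (supnorm b)"
    if s: "s \<in> pos_cone" and sb: "s \<le> (\<lambda>i. max (b i) (Gam_rho (\<lambda>t. \<rho> t / 2) Ii gam mu s i))" for s b
  proof -
    obtain r k where r: "0 \<le> r" "s \<le> \<sigma> r" "s k = \<sigma> r k"
      using touching_level[OF \<sigma> s] .
    have "r \<le> inv_into {0..} \<phi>min (supnorm b)"
    proof (cases "s k \<le> b k")
      case True
      then have "\<phi>min r \<le> supnorm b"
        using bounds[OF r(1), of k] r(3) abs_le_supnorm[of b k] by linarith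
      then show ?thesis
        using Kinf_inv_into_less_iff[OF \<phi>(1) r(1) supnorm_nonneg[of b]] by linarith
    next
      case False
      moreover have "s k \<le> max (b k) (Gam_rho (\<lambda>t. \<rho> t / 2) Ii gam mu s k)"
        using sb by (simp add: le_fun_def)
      ultimately have "\<sigma> r k = 0"
        using touching_half_decay_zero[OF \<rho> dec[OF r(1)] s r(2,3)] by (simp add: le_max_iff_disj)
      then have "r = 0" using Kinf_pos[OF \<sigma>[of k], of r] r(1) by force
      then show ?thesis using Kinf_inv_into_nonneg[OF \<phi>(1) supnorm_nonneg] by simp
    qed
    then have "\<phi>max r \<le> \<phi> (supnorm b)"
      unfolding \<phi>_def using Kinf_mono[OF \<phi>(2) r(1)] by simp
    moreover have "\<bar>s i\<bar> \<le> \<phi>max r" for i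
      using r(2) bounds[OF r(1), of i] pos_coneD[OF s, of i] unfolding le_fun_def
      by (metis abs_of_nonneg order_trans)
    ultimately show ?thesis by (intro supnorm_leI) (rule order_trans)
  qed
  have "Kinf \<phi>" unfolding \<phi>_def by (intro Kinf_compose Kinf_inverse \<phi>)
  then have "max_MBI (Gam_rho (\<lambda>t. \<rho> t / 2) Ii gam mu)"
    unfolding max_MBI_def using gain by blast
  then show ?thesis using Kinf_divide[OF \<rho>, of 2] by auto
qed

end

section \<open>From a decay chain to a path of strict decay\<close>

context gain_op
begin

definition decay_step :: "(real \<Rightarrow> real) \<Rightarrow> ('i \<Rightarrow> real) \<Rightarrow> ('i \<Rightarrow> real) \<Rightarrow> bool" where
  "decay_step \<rho> x y \<longleftrightarrow> (\<forall>i. x i < y i) \<and> Gam_rho \<rho> Ii gam mu y \<le> x"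

lemma log_interp_chain_decay:
  fixes p :: "int \<Rightarrow> 'i \<Rightarrow> real"
  assumes \<rho>: "Kinf \<rho>" and step: "\<And>k. decay_step \<rho> (p k) (p (k + 1))"
    and seq: "\<And>i. kinf_sequence (\<lambda>k. p k i)" and "0 \<le> r"
  shows "Gam_rho \<rho> Ii gam mu (\<lambda>i. log_interp (\<lambda>k. p k i) r) \<le> (\<lambda>i. log_interp (\<lambda>k. p k i) r)"
    (is "Gam_rho \<rho> Ii gam mu ?s \<le> ?s")
proof (cases "r = 0")
  case True
  then show ?thesis
    using Gam_zero Kinf_0[OF \<rho>] by (simp add: log_interp_def Gam_rho_def le_fun_def)
next
  case False
  define a where "a = \<lfloor>ln r\<rfloor>"
  have lo: "p a i \<le> ?s i" and hi: "?s i \<le> p (a + 1) i" for i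
    using log_interp_floor_bounds[of "\<lambda>k. p k i" r, OF kinf_sequence.step_le[OF seq]] False \<open>0 \<le> r\<close>
    unfolding a_def by auto
  have "0 \<le> p a i" for i
    using kinf_sequence.seq_pos[OF seq] less_imp_le by blast
  then have "?s \<in> pos_cone"
    using lo by (intro pos_coneI) (meson order_trans)
  moreover have "?s \<le> p (a + 1)"
    using hi by (simp add: le_fun_def)
  ultimately have "Gam_rho \<rho> Ii gam mu ?s \<le> Gam_rho \<rho> Ii gam mu (p (a + 1))"
    by (rule Gam_rho_mono[OF \<rho>])
  also have "\<dots> \<le> p a" using step[of a] unfolding decay_step_def by blast
  also have "\<dots> \<le> ?s" using lo by (simp add: le_fun_def)
  finally show ?thesis .
qed

lemma path_strict_decay_of_chain:
  fixes p :: "int \<Rightarrow> 'i \<Rightarrow> real"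
  assumes \<rho>: "Kinf \<rho>"
    and step: "\<And>k. decay_step \<rho> (p k) (p (k + 1))"
    and tendsto_0: "\<And>i. (\<lambda>n. p (- int n) i) \<longlonglongrightarrow> 0"
    and unbounded: "\<And>i M. \<exists>k. M < p k i"
  shows "path_strict_decay Ii gam mu (\<lambda>r i. log_interp (\<lambda>k. p k i) r)"
    (is "path_strict_decay Ii gam mu ?\<sigma>")
proof -
  have seq: "kinf_sequence (\<lambda>k. p k i)" for i
    by unfold_locales (use step tendsto_0 unbounded in \<open>auto simp: decay_step_def\<close>)
  interpret p: kinf_sequence "\<lambda>k. p k i" for i by (rule seq)
  define pmin pmax where "pmin k = Min (range (p k))" and "pmax k = Max (range (p k))" for k
  interpret pmin: kinf_sequence pmin
    using kinf_sequence_Min[of "\<lambda>i k. p k i", OF seq] unfolding pmin_def by (simp add: image_def)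
  interpret pmax: kinf_sequence pmax
    using kinf_sequence_Max[of "\<lambda>i k. p k i", OF seq] unfolding pmax_def by (simp add: image_def)
  have bounds: "log_interp pmin r \<le> ?\<sigma> r i \<and> ?\<sigma> r i \<le> log_interp pmax r" for r i
    unfolding pmin_def pmax_def by (intro conjI log_interp_mono_seq Min_le Max_ge; simp)
  have lipschitz: "\<exists>l L. 0 < l \<and> l \<le> L \<and> (\<forall>i. bi_lipschitz_on K l L (inv_into {0..} (\<lambda>r. ?\<sigma> r i)))"
    if "compact K" "K \<subseteq> {0<..}" for K
    by (rule bi_lipschitz_on_uniform) (use p.bi_lipschitz_inverse_log_interp[OF that] in blast)
  show ?thesis
    unfolding path_strict_decay_def
  proof (intro conjI allI impI)
    show "?\<sigma> r \<in> pos_cone" if "0 \<le> r" for r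
      using Kinf_nonneg[OF p.Kinf_log_interp that] by (auto intro: pos_coneI)
    show "\<exists>\<rho>. Kinf \<rho> \<and> (\<forall>r\<ge>0. Gam_rho \<rho> Ii gam mu (?\<sigma> r) \<le> ?\<sigma> r)"
      using \<rho> log_interp_chain_decay[OF \<rho> step seq] by blast
    show "\<exists>\<phi>min \<phi>max. Kinf \<phi>min \<and> Kinf \<phi>max \<and> (\<forall>r\<ge>0. \<forall>i. \<phi>min r \<le> ?\<sigma> r i \<and> ?\<sigma> r i \<le> \<phi>max r)"
      using pmin.Kinf_log_interp pmax.Kinf_log_interp bounds by blast
    show "Kinf (\<lambda>r. ?\<sigma> r i)" for i
      by (rule p.Kinf_log_interp)
    show "\<exists>l L. 0 < l \<and> l \<le> L \<and> (\<forall>r1\<in>K. \<forall>r2\<in>K. \<forall>i.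
        l * \<bar>r1 - r2\<bar> \<le> \<bar>inv_into {0..} (\<lambda>r. ?\<sigma> r i) r1 - inv_into {0..} (\<lambda>r. ?\<sigma> r i) r2\<bar>
      \<and> \<bar>inv_into {0..} (\<lambda>r. ?\<sigma> r i) r1 - inv_into {0..} (\<lambda>r. ?\<sigma> r i) r2\<bar> \<le> L * \<bar>r1 - r2\<bar>)"
      if "compact K \<and> K \<subseteq> {0<..}" for K
      using lipschitz[of K] that unfolding bi_lipschitz_on_def by blast
  qed
qed

end

section \<open>From the MBI property to a decay chain\<close>

locale MBI_gain = gain_op Ii gam mu for Ii :: "'i::finite \<Rightarrow> 'i set" and gam mu +
  fixes \<rho> \<phi> :: "real \<Rightarrow> real"
  assumes \<rho>: "Kinf \<rho>" and \<phi>: "Kinf \<phi>"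
    and MBI: "\<And>s b. s \<in> pos_cone \<Longrightarrow> b \<in> pos_cone \<Longrightarrow>
        s \<le> (\<lambda>i. max (b i) (Gam_rho \<rho> Ii gam mu s i)) \<Longrightarrow> supnorm s \<le> \<phi> (supnorm b)"
begin

abbreviation \<Gamma>\<^sub>\<rho> where "\<Gamma>\<^sub>\<rho> \<equiv> Gam_rho \<rho> Ii gam mu"

text \<open>\<open>gsol c\<close> is the greatest solution of \<open>x \<le> c \<oplus> \<Gamma>\<^sub>\<rho>(x)\<close>: the MBI property bounds all
  solutions by \<open>\<phi> c\<close>, and as in the Knaster-Tarski theorem their supremum is again a solution.\<close>

definition subsol :: "real \<Rightarrow> ('i \<Rightarrow> real) set" where
  "subsol c = {x \<in> pos_cone. \<forall>i. x i \<le> max c (\<Gamma>\<^sub>\<rho> x i)}"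

definition gsol :: "real \<Rightarrow> 'i \<Rightarrow> real" where
  "gsol c = (\<lambda>i. SUP x\<in>subsol c. x i)"

lemma subsol_bounded:
  assumes c: "0 \<le> c" and x: "x \<in> subsol c"
  shows "x i \<le> \<phi> c"
proof -
  have "supnorm x \<le> \<phi> (supnorm (\<lambda>_::'i. c))"
    using x c by (intro MBI) (auto simp: subsol_def le_fun_def intro: pos_coneI)
  then show ?thesis using abs_le_supnorm[of x i] c by simp
qed

lemma zero_in_subsol: "0 \<le> c \<Longrightarrow> (\<lambda>_. 0) \<in> subsol c"
  unfolding subsol_def by (auto intro: pos_coneI)

lemma gsol_upper: "0 \<le> c \<Longrightarrow> x \<in> subsol c \<Longrightarrow> x i \<le> gsol c i"
  unfolding gsol_def using subsol_bounded by (auto intro!: cSUP_upper bdd_aboveI2)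

lemma gsol_pos: "0 \<le> c \<Longrightarrow> gsol c \<in> pos_cone"
  using gsol_upper[OF _ zero_in_subsol] by (fastforce intro: pos_coneI)

lemma gsol_fixpoint:
  assumes c: "0 \<le> c"
  shows "gsol c i = max c (\<Gamma>\<^sub>\<rho> (gsol c) i)"
proof -
  have le: "gsol c j \<le> max c (\<Gamma>\<^sub>\<rho> (gsol c) j)" for j
  proof -
    have "(SUP x\<in>subsol c. x j) \<le> max c (\<Gamma>\<^sub>\<rho> (gsol c) j)"
    proof (rule cSUP_least)
      show "subsol c \<noteq> {}" using zero_in_subsol[OF c] by blast
      fix x assume x: "x \<in> subsol c"
      have "\<Gamma>\<^sub>\<rho> x j \<le> \<Gamma>\<^sub>\<rho> (gsol c) j"
        using Gam_rho_mono[OF \<rho>] x gsol_upper[OF c x] by (auto simp: subsol_def le_fun_def)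
      moreover have "x j \<le> max c (\<Gamma>\<^sub>\<rho> x j)" using x by (simp add: subsol_def)
      ultimately show "x j \<le> max c (\<Gamma>\<^sub>\<rho> (gsol c) j)"
        by (meson max.mono order_refl order_trans)
    qed
    then show ?thesis by (simp add: gsol_def)
  qed
  define F where "F j = max c (\<Gamma>\<^sub>\<rho> (gsol c) j)" for j
  have mono: "\<Gamma>\<^sub>\<rho> (gsol c) j \<le> \<Gamma>\<^sub>\<rho> F j" for j
    using Gam_rho_mono[OF \<rho> gsol_pos[OF c]] le unfolding F_def by (simp add: le_fun_def)
  have "F j \<le> max c (\<Gamma>\<^sub>\<rho> F j)" for j
    by (simp only: F_def[of j]) (rule max.mono[OF order_refl mono])
  moreover have "F \<in> pos_cone" unfolding F_def using c by (auto intro: pos_coneI)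
  ultimately have "F \<in> subsol c" by (simp add: subsol_def)
  then show ?thesis using gsol_upper[OF c, of F i] le[of i] unfolding F_def by (intro antisym) auto
qed

lemma gsol_ge: "0 \<le> c \<Longrightarrow> c \<le> gsol c i"
  using gsol_fixpoint[of c i] by simp

lemma gsol_decay: "0 \<le> c \<Longrightarrow> \<Gamma>\<^sub>\<rho> (gsol c) \<le> gsol c"
  using gsol_fixpoint[of c] by (simp add: le_fun_def)

lemma gsol_0: "gsol 0 = (\<lambda>_. 0)"
proof
  fix i
  have "gsol 0 \<in> subsol 0"
    using gsol_fixpoint[of 0] gsol_pos[of 0] by (simp add: subsol_def)
  then show "gsol 0 i = 0"
    using subsol_bounded[of 0 "gsol 0" i] Kinf_0[OF \<phi>] pos_coneD[OF gsol_pos[of 0], of i] by simp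
qed

text \<open>In the descent below, each step moves strictly towards \<open>Q\<close> but stays above the
  level-\<open>m\<close> image of the previous point. As the gains of the levels decrease strictly from
  \<open>\<rho>\<close> to \<open>\<rho>/2\<close>, the invariant \<open>level m (\<Gamma> x\<^sub>m) \<le> x\<^sub>m\<close> survives,
  and every step is a decay step with gain \<open>\<rho>/2\<close>.\<close>

definition level :: "nat \<Rightarrow> real \<Rightarrow> real" where
  "level m t = t + \<rho> t * (1 / 2 + 1 / 2 ^ (m + 1))"

lemma level_0: "level 0 t = t + \<rho> t"
  unfolding level_def by simp

lemma level_mono: "0 \<le> s \<Longrightarrow> s \<le> t \<Longrightarrow> level m s \<le> level m t"
  unfolding level_def using Kinf_mono[OF \<rho>, of s t] by (intro add_mono mult_right_mono) auto

lemma level_Suc_less: "0 < t \<Longrightarrow> level (Suc m) t < level m t"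
  unfolding level_def using Kinf_pos[OF \<rho>, of t] by (simp add: field_simps)

lemma level_Suc_le: "0 \<le> t \<Longrightarrow> level (Suc m) t \<le> level m t"
  using level_Suc_less[of t m] Kinf_0[OF \<rho>] by (cases "t = 0") (auto simp: level_def)

lemma half_gain_le_level: "0 \<le> t \<Longrightarrow> t + \<rho> t / 2 \<le> level m t"
  unfolding level_def using Kinf_nonneg[OF \<rho>, of t] by (simp add: field_simps)

lemma level_le_gain: "0 \<le> t \<Longrightarrow> level m t \<le> t + \<rho> t"
proof -
  assume t: "0 \<le> t"
  have "1 / 2 + 1 / 2 ^ (m + 1) \<le> (1::real)" by (simp add: field_simps)
  then show ?thesis
    unfolding level_def using Kinf_nonneg[OF \<rho> t] by (simp add: mult_left_le)
qed

primrec descent :: "('i \<Rightarrow> real) \<Rightarrow> ('i \<Rightarrow> real) \<Rightarrow> nat \<Rightarrow> 'i \<Rightarrow> real" where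
  "descent A Q 0 = A"
| "descent A Q (Suc m) =
     (\<lambda>i. max (level (Suc m) (\<Gamma> (descent A Q m) i)) ((descent A Q m i + Q i) / 2))"

context
  fixes A Q :: "'i \<Rightarrow> real"
  assumes A: "A \<in> pos_cone" "\<Gamma>\<^sub>\<rho> A \<le> A"
    and Q: "Q \<in> pos_cone" "\<And>i. Q i < A i"
begin

lemma descent_invariant:
  "descent A Q m \<in> pos_cone \<and> (\<forall>i. Q i < descent A Q m i)
    \<and> (\<forall>i. level m (\<Gamma> (descent A Q m) i) \<le> descent A Q m i)"
proof (induction m)
  case 0
  then show ?case using A Q by (simp add: level_0 Gam_rho_def le_fun_def)
next
  case (Suc m)
  define x y where "x = descent A Q m" and "y = descent A Q (Suc m)"
  have x: "x \<in> pos_cone" "\<And>i. Q i < x i" "\<And>i. level m (\<Gamma> x i) \<le> x i"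
    using Suc unfolding x_def by auto
  have y: "y i = max (level (Suc m) (\<Gamma> x i)) ((x i + Q i) / 2)" for i
    unfolding x_def y_def by simp
  have Qy: "Q i < y i" for i
    using x(2)[of i] by (simp add: y less_max_iff_disj)
  have y_pos: "y \<in> pos_cone"
    using Qy Q(1) by (meson less_imp_le order_trans pos_coneD pos_coneI)
  have "level (Suc m) (\<Gamma> x i) \<le> x i" for i
    using level_Suc_le[OF Gam_nonneg[OF x(1)]] x(3) by (rule order_trans)
  then have "y \<le> x"
    using x(2) by (simp add: le_fun_def y less_imp_le)
  then have "level (Suc m) (\<Gamma> y i) \<le> level (Suc m) (\<Gamma> x i)" for i
    by (intro level_mono Gam_nonneg[OF y_pos] Gam_mono[OF y_pos])
  then have "level (Suc m) (\<Gamma> y i) \<le> y i" for i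
    by (simp add: y le_max_iff_disj)
  then show ?case using y_pos Qy unfolding y_def by simp
qed

lemma descent_pos: "descent A Q m \<in> pos_cone"
  using descent_invariant by blast

lemma descent_gt: "Q i < descent A Q m i"
  using descent_invariant by blast

lemma decay_step_descent: "decay_step (\<lambda>t. \<rho> t / 2) (descent A Q (Suc m)) (descent A Q m)"
  unfolding decay_step_def
proof
  show "\<forall>i. descent A Q (Suc m) i < descent A Q m i"
  proof
    fix i
    let ?g = "\<Gamma> (descent A Q m) i"
    have "level (Suc m) ?g < descent A Q m i"
    proof (cases "?g = 0")
      case True
      then show ?thesis
        using descent_gt[of i m] pos_coneD[OF Q(1), of i] Kinf_0[OF \<rho>] by (simp add: level_def)
    next
      case False
      then have "0 < ?g" using Gam_nonneg[OF descent_pos] by (simp add: order_le_neq_trans)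
      then show ?thesis using level_Suc_less descent_invariant by (meson less_le_trans)
    qed
    then show "descent A Q (Suc m) i < descent A Q m i" using descent_gt[of i m] by simp
  qed
  show "Gam_rho (\<lambda>t. \<rho> t / 2) Ii gam mu (descent A Q m) \<le> descent A Q (Suc m)"
    using half_gain_le_level[OF Gam_nonneg[OF descent_pos]]
    by (simp add: Gam_rho_def le_fun_def le_max_iff_disj)
qed

lemma descent_tendsto:
  obtains L where "\<And>i. (\<lambda>m. descent A Q m i) \<longlonglongrightarrow> L i" "L \<in> pos_cone" "Q \<le> L"
    "\<And>i. L i \<le> max (\<Gamma>\<^sub>\<rho> L i) (Q i)"
proof -
  have dec: "decseq (\<lambda>m. descent A Q m i)" for i
    using decay_step_descent by (intro decseq_SucI) (simp add: decay_step_def less_imp_le)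
  have "\<forall>i. \<exists>l. (\<lambda>m. descent A Q m i) \<longlonglongrightarrow> l"
  proof
    fix i
    have "\<forall>m. Q i \<le> descent A Q m i" using descent_gt less_imp_le by blast
    then show "\<exists>l. (\<lambda>m. descent A Q m i) \<longlonglongrightarrow> l"
      using decseq_convergent[OF dec] by metis
  qed
  then obtain L where L: "\<And>i. (\<lambda>m. descent A Q m i) \<longlonglongrightarrow> L i"
    by (metis choice)
  have QL: "Q i \<le> L i" for i
    by (rule LIMSEQ_le_const[OF L]) (use descent_gt in \<open>auto intro: less_imp_le\<close>)
  have L_pos: "L \<in> pos_cone"
    using QL Q(1) by (meson order_trans pos_coneD pos_coneI)
  have "L i \<le> max (\<Gamma>\<^sub>\<rho> L i) ((L i + Q i) / 2)" for i
  proof (rule LIMSEQ_le[OF LIMSEQ_Suc[OF L]])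
    show "(\<lambda>m. max (\<Gamma>\<^sub>\<rho> (descent A Q m) i) ((descent A Q m i + Q i) / 2))
        \<longlonglongrightarrow> max (\<Gamma>\<^sub>\<rho> L i) ((L i + Q i) / 2)"
      by (intro tendsto_max tendsto_divide tendsto_add Gam_rho_tendsto[OF \<rho> descent_pos L_pos L] L) auto
    have "level (Suc m) (\<Gamma> (descent A Q m) i) \<le> \<Gamma>\<^sub>\<rho> (descent A Q m) i" for m
      using level_le_gain[OF Gam_nonneg[OF descent_pos]] by (simp add: Gam_rho_def)
    then have "descent A Q (Suc m) i \<le> max (\<Gamma>\<^sub>\<rho> (descent A Q m) i) ((descent A Q m i + Q i) / 2)" for m
      unfolding descent.simps(2) by (rule max.mono[OF _ order_refl])
    then show "\<exists>N. \<forall>m\<ge>N. descent A Q (Suc m) i \<le> max (\<Gamma>\<^sub>\<rho> (descent A Q m) i) ((descent A Q m i + Q i) / 2)"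
      by blast
  qed
  then have "L i \<le> max (\<Gamma>\<^sub>\<rho> L i) (Q i)" for i
    by (auto simp: le_max_iff_disj)
  moreover have "Q \<le> L" using QL by (simp add: le_fun_def)
  ultimately show ?thesis using that L L_pos by blast
qed

lemma descent_tendsto_gsol:
  assumes c: "0 \<le> c" and Q_eq: "Q = gsol c"
  shows "(\<lambda>m. descent A Q m i) \<longlonglongrightarrow> Q i"
proof -
  obtain L where L: "\<And>i. (\<lambda>m. descent A Q m i) \<longlonglongrightarrow> L i" and L_pos: "L \<in> pos_cone"
    and QL: "Q \<le> L" and LQ: "\<And>i. L i \<le> max (\<Gamma>\<^sub>\<rho> L i) (Q i)"
    using descent_tendsto by blast
  have "L j \<le> max c (\<Gamma>\<^sub>\<rho> L j)" for j
  proof -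
    have "\<Gamma>\<^sub>\<rho> Q j \<le> \<Gamma>\<^sub>\<rho> L j" using Gam_rho_mono[OF \<rho> Q(1) QL] by (simp add: le_fun_def)
    moreover have "Q j = max c (\<Gamma>\<^sub>\<rho> Q j)" using gsol_fixpoint[OF c, of j] Q_eq by simp
    ultimately show ?thesis using LQ[of j] by (metis le_max_iff_disj order_trans)
  qed
  then have "L \<in> subsol c" using L_pos by (simp add: subsol_def)
  then have "L i = Q i" using gsol_upper[OF c] QL Q_eq by (simp add: le_fun_def order_antisym)
  then show ?thesis using L[of i] by simp
qed

lemma descent_reaches_gsol:
  assumes c: "0 < c" and Q_eq: "Q = gsol c"
  obtains m where "decay_step (\<lambda>t. \<rho> t / 2) Q (descent A Q m)"
proof -
  have \<rho>2: "Kinf (\<lambda>t. \<rho> t / 2)" by (rule Kinf_divide[OF \<rho>]) simp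
  have "\<forall>\<^sub>F m in sequentially. Gam_rho (\<lambda>t. \<rho> t / 2) Ii gam mu (descent A Q m) i < Q i" for i
  proof -
    have "Gam_rho (\<lambda>t. \<rho> t / 2) Ii gam mu Q i < Q i"
    proof (cases "\<Gamma> Q i = 0")
      case True
      then show ?thesis
        using gsol_ge[of c i] c Q_eq Kinf_0[OF \<rho>] by (simp add: Gam_rho_def)
    next
      case False
      then have "0 < \<rho> (\<Gamma> Q i)" using Kinf_pos[OF \<rho>] Gam_nonneg[OF Q(1), of i] by simp
      moreover have "\<Gamma> Q i + \<rho> (\<Gamma> Q i) \<le> Q i"
        using gsol_decay[of c] c Q_eq by (simp add: Gam_rho_def le_fun_def)
      ultimately show ?thesis by (simp add: Gam_rho_def)
    qed
    moreover have "(\<lambda>m. Gam_rho (\<lambda>t. \<rho> t / 2) Ii gam mu (descent A Q m) i)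
        \<longlonglongrightarrow> Gam_rho (\<lambda>t. \<rho> t / 2) Ii gam mu Q i"
      using Gam_rho_tendsto[OF \<rho>2 descent_pos Q(1) descent_tendsto_gsol[OF less_imp_le[OF c] Q_eq]] .
    ultimately show ?thesis by (simp add: order_tendstoD(2))
  qed
  then have "\<forall>\<^sub>F m in sequentially. \<forall>i. Gam_rho (\<lambda>t. \<rho> t / 2) Ii gam mu (descent A Q m) i < Q i"
    by (rule eventually_all_finite)
  then obtain m where "\<And>i. Gam_rho (\<lambda>t. \<rho> t / 2) Ii gam mu (descent A Q m) i < Q i"
    by (auto simp: eventually_sequentially)
  then have "decay_step (\<lambda>t. \<rho> t / 2) Q (descent A Q m)"
    using descent_gt by (auto simp: decay_step_def le_fun_def less_imp_le)
  then show ?thesis by (rule that)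
qed

lemma tranclp_decay_step_gsol:
  assumes "0 < c" "Q = gsol c"
  shows "(decay_step (\<lambda>t. \<rho> t / 2))\<^sup>+\<^sup>+ Q A"
proof -
  have chain: "(decay_step (\<lambda>t. \<rho> t / 2))\<^sup>*\<^sup>* (descent A Q m) A" for m
  proof (induction m)
    case (Suc m)
    show ?case by (rule converse_rtranclp_into_rtranclp[OF decay_step_descent Suc.IH])
  qed simp
  obtain m where "decay_step (\<lambda>t. \<rho> t / 2) Q (descent A Q m)"
    using descent_reaches_gsol[OF assms] .
  then show ?thesis using chain by (rule rtranclp_into_tranclp2)
qed

end

primrec radius :: "nat \<Rightarrow> real" where
  "radius 0 = 1"
| "radius (Suc n) = supnorm (gsol (radius n)) + 1"

lemma radius_ge: "real n + 1 \<le> radius n"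
proof (induction n)
  case (Suc n)
  then have "radius n \<le> supnorm (gsol (radius n))"
    using gsol_ge[of "radius n" undefined] abs_le_supnorm[of "gsol (radius n)" undefined] by simp
  then show ?case using Suc by simp
qed simp

lemma radius_pos: "0 < radius n"
  using radius_ge[of n] by simp

lemma gsol_radius_less: "gsol (radius n) i < gsol (radius (Suc n)) i"
proof -
  have "gsol (radius n) i \<le> supnorm (gsol (radius n))"
    using abs_le_supnorm[of "gsol (radius n)" i] by simp
  also have "\<dots> < radius (Suc n)" by simp
  also have "\<dots> \<le> gsol (radius (Suc n)) i" using gsol_ge radius_pos less_imp_le by blast
  finally show ?thesis .
qed

lemma decay_chain_up:
  obtains g where "g 0 = gsol (radius 0)" "\<And>k. decay_step (\<lambda>t. \<rho> t / 2) (g k) (g (Suc k))"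
    "\<And>i M. \<exists>k. M < g k i"
proof -
  let ?R = "decay_step (\<lambda>t. \<rho> t / 2)"
  have steps: "?R\<^sup>+\<^sup>+ (gsol (radius n)) (gsol (radius (Suc n)))" for n
    using radius_pos[of n] radius_pos[of "Suc n"]
    by (intro tranclp_decay_step_gsol)
       (simp_all add: gsol_pos gsol_decay gsol_radius_less less_imp_le del: radius.simps)
  obtain g where g: "g 0 = gsol (radius 0)" "\<And>k. ?R (g k) (g (Suc k))"
    "\<And>n. \<exists>k. g k = gsol (radius n)"
    using chain_through_tranclp[of ?R "\<lambda>n. gsol (radius n)", OF steps] by blast
  have "\<exists>k. M < g k i" for i M
  proof -
    obtain n where "M < real n" using reals_Archimedean2 by blast
    moreover obtain k where "g k = gsol (radius n)" using g(3) by blast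
    moreover have "real n + 1 \<le> gsol (radius n) i"
      using radius_ge[of n] gsol_ge[OF less_imp_le[OF radius_pos]] by (meson order_trans)
    ultimately show ?thesis by (intro exI[of _ k]) simp
  qed
  then show ?thesis using g that by blast
qed

lemma decay_chain_down:
  obtains b where "b 0 = gsol (radius 0)" "\<And>m. decay_step (\<lambda>t. \<rho> t / 2) (b (Suc m)) (b m)"
    "\<And>i. (\<lambda>m. b m i) \<longlonglongrightarrow> 0"
proof -
  have top: "gsol (radius 0) \<in> pos_cone" "\<Gamma>\<^sub>\<rho> (gsol (radius 0)) \<le> gsol (radius 0)"
    "\<And>i. 0 < gsol (radius 0) i"
    using gsol_pos gsol_decay gsol_ge[of "radius 0"] by (auto intro: less_le_trans[OF zero_less_one])
  have zero: "(\<lambda>_. 0) \<in> pos_cone" by (auto intro: pos_coneI)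
  define b where "b = descent (gsol (radius 0)) (\<lambda>_. 0)"
  have "decay_step (\<lambda>t. \<rho> t / 2) (b (Suc m)) (b m)" for m
    unfolding b_def by (rule decay_step_descent[OF top(1,2) zero top(3)])
  moreover have "(\<lambda>m. b m i) \<longlonglongrightarrow> 0" for i
    unfolding b_def by (rule descent_tendsto_gsol[OF top(1,2) zero top(3) order_refl gsol_0[symmetric]])
  ultimately show ?thesis using that[of b] by (simp add: b_def)
qed

lemma decay_chain:
  obtains p :: "int \<Rightarrow> 'i \<Rightarrow> real" where
    "\<And>k. decay_step (\<lambda>t. \<rho> t / 2) (p k) (p (k + 1))"
    "\<And>i. (\<lambda>n. p (- int n) i) \<longlonglongrightarrow> 0"
    "\<And>i M. \<exists>k. M < p k i"
proof -
  obtain g where g: "g 0 = gsol (radius 0)" "\<And>k. decay_step (\<lambda>t. \<rho> t / 2) (g k) (g (Suc k))"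
    "\<And>i M. \<exists>k. M < g k i"
    using decay_chain_up by blast
  obtain b where b: "b 0 = gsol (radius 0)" "\<And>m. decay_step (\<lambda>t. \<rho> t / 2) (b (Suc m)) (b m)"
    "\<And>i. (\<lambda>m. b m i) \<longlonglongrightarrow> 0"
    using decay_chain_down by blast
  obtain p where p: "\<And>k. decay_step (\<lambda>t. \<rho> t / 2) (p k) (p (k + 1))"
    "\<And>n. p (int n) = g n" "\<And>n. p (- int n) = b n"
    using int_chain_of_nat_chains[of g b, OF _ g(2) b(2)] g(1) b(1) by metis
  have "\<exists>k. M < p k i" for i M
    using g(3)[of M i] p(2) by metis
  moreover have "(\<lambda>n. p (- int n) i) \<longlonglongrightarrow> 0" for i
    using b(3) p(3) by simp
  ultimately show ?thesis using that p(1) by blast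
qed

end

theorem theorem3p27:
  fixes Ii :: "'i::finite \<Rightarrow> 'i set"
    and gam :: "'i \<Rightarrow> 'i \<Rightarrow> real \<Rightarrow> real"
    and mu :: "'i \<Rightarrow> ('i \<Rightarrow> real) \<Rightarrow> ereal"
  assumes "gain_operator Ii gam mu"
  shows "(\<exists>\<rho>. Kinf \<rho> \<and> max_MBI (Gam_rho \<rho> Ii gam mu))
     \<longleftrightarrow> (\<exists>\<sigma>. path_strict_decay Ii gam mu \<sigma>)"
proof
  assume "\<exists>\<rho>. Kinf \<rho> \<and> max_MBI (Gam_rho \<rho> Ii gam mu)"
  then obtain \<rho> \<phi> where "MBI_gain Ii gam mu \<rho> \<phi>"
    using assms unfolding max_MBI_def MBI_gain_def MBI_gain_axioms_def gain_op_def by blast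
  then interpret MBI_gain Ii gam mu \<rho> \<phi> .
  obtain p where p: "\<And>k. decay_step (\<lambda>t. \<rho> t / 2) (p k) (p (k + 1))"
    "\<And>i. (\<lambda>n. p (- int n) i) \<longlonglongrightarrow> 0" "\<And>i M. \<exists>k. M < p k i"
    using decay_chain by blast
  have "path_strict_decay Ii gam mu (\<lambda>r i. log_interp (\<lambda>k. p k i) r)"
    by (rule path_strict_decay_of_chain[OF Kinf_divide[OF \<rho>]]) (use p in auto)
  then show "\<exists>\<sigma>. path_strict_decay Ii gam mu \<sigma>" by blast
next
  assume "\<exists>\<sigma>. path_strict_decay Ii gam mu \<sigma>"
  then show "\<exists>\<rho>. Kinf \<rho> \<and> max_MBI (Gam_rho \<rho> Ii gam mu)"
    using gain_op.MBI_of_path_strict_decay[OF gain_op.intro[OF assms]] by blast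
qed

end
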